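(* Let $d\ge2$, $n\ge1$. If $U$ is an $n$-qudit unitary with $\mathrm{CiS}[U]=0$, then for every density operator $\rho$ on $(\mathbb{C}^d)^{\otimes n}$, $\bar S^{(2)}(U\rho U^\dagger)\le\bar S^{(2)}(\rho)$.
   Context: $\bar S^{(2)}(\rho)=2^{-n}\sum_{A\subseteq[n]}S^{(2)}(\rho_A)$, where $\rho_A$ is the reduced state on the qudits in $A$ and $S^{(2)}(\rho_A)=-\log\mathrm{Tr}(\rho_A^2)$ (with $S^{(2)}(\rho_\emptyset)=0$). Let $V=\mathbb{Z}_d\times\mathbb{Z}_d$; for $a=(s,t)\in V$, $P_a=X^sZ^t$ with $X|j\rangle=|j+1\bmod d\rangle$, $Z|j\rangle=e^{2\pi ij/d}|j\rangle$; $P_{\vec a}=\bigotimes_iP_{a_i}$, $|\vec a|=\#\{i:a_i\ne(0,0)\}$. $\|A\|_2=(d^{-n}\mathrm{Tr}(A^\dagger A))^{1/2}$. For $\|O\|_2=1$, $P_O[\vec a]=d^{-2n}|\mathrm{Tr}(OP_{\vec a})|^2$, $I[O]=\sum_{\vec a}|\vec a|P_O[\vec a]$, and $\mathrm{CiS}[U]=\max_{\|O\|_2=1}|I[UOU^\dagger]-I[O]|$. *)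

theory Defs
  imports Complex_Main
begin

text \<open>A computational basis state of the qudits in an index set S
 (subset of the qudits 0..n-1) is a digit function j :: nat => nat with j i < d for
 i in S and j i = 0 outside S.  Operators on the qudits in S are complex matrices
 indexed by such basis states, represented as functions of two basis states; only
 their values on basis states matter.\<close>

type_synonym cfg = "nat \<Rightarrow> nat"
type_synonym op = "cfg \<Rightarrow> cfg \<Rightarrow> complex"

definition cfgs :: "nat \<Rightarrow> nat set \<Rightarrow> cfg set" where
  "cfgs d S = {j. (\<forall>i\<in>S. j i < d) \<and> (\<forall>i. i \<notin> S \<longrightarrow> j i = 0)}"

definition qudits :: "nat \<Rightarrow> nat set" where
  "qudits n = {..<n}"

definition mmul :: "nat \<Rightarrow> nat set \<Rightarrow> op \<Rightarrow> op \<Rightarrow> op" where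
  "mmul d S A B = (\<lambda>x y. \<Sum>z\<in>cfgs d S. A x z * B z y)"

definition adj :: "op \<Rightarrow> op" where
  "adj A = (\<lambda>x y. cnj (A y x))"

definition idop :: op where
  "idop = (\<lambda>x y. if x = y then 1 else 0)"

definition tr :: "nat \<Rightarrow> nat set \<Rightarrow> op \<Rightarrow> complex" where
  "tr d S A = (\<Sum>x\<in>cfgs d S. A x x)"

definition unitary :: "nat \<Rightarrow> nat \<Rightarrow> op \<Rightarrow> bool" where
  "unitary d n U \<longleftrightarrow>
     (\<forall>x\<in>cfgs d (qudits n). \<forall>y\<in>cfgs d (qudits n).
        mmul d (qudits n) U (adj U) x y = idop x y \<and> mmul d (qudits n) (adj U) U x y = idop x y)"

definition density :: "nat \<Rightarrow> nat \<Rightarrow> op \<Rightarrow> bool" where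
  "density d n \<rho> \<longleftrightarrow>
     (\<forall>x\<in>cfgs d (qudits n). \<forall>y\<in>cfgs d (qudits n). \<rho> y x = cnj (\<rho> x y)) \<and>
     (\<forall>v :: cfg \<Rightarrow> complex.
        let q = (\<Sum>x\<in>cfgs d (qudits n). \<Sum>y\<in>cfgs d (qudits n). cnj (v x) * \<rho> x y * v y)
        in Im q = 0 \<and> Re q \<ge> 0) \<and>
     tr d (qudits n) \<rho> = 1"

definition merge :: "nat set \<Rightarrow> cfg \<Rightarrow> cfg \<Rightarrow> cfg" where
  "merge A x z = (\<lambda>i. if i \<in> A then x i else z i)"

definition reduced :: "nat \<Rightarrow> nat \<Rightarrow> nat set \<Rightarrow> op \<Rightarrow> op" where
  "reduced d n A \<rho> = (\<lambda>x y. \<Sum>z\<in>cfgs d (qudits n - A). \<rho> (merge A x z) (merge A y z))"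

text \<open>Renyi-2 entropy of a state on the qudits in A (natural logarithm).
 For A = {} this is -log 1 = 0 automatically.\<close>
definition renyi2 :: "nat \<Rightarrow> nat set \<Rightarrow> op \<Rightarrow> real" where
  "renyi2 d A \<sigma> = - ln (Re (tr d A (mmul d A \<sigma> \<sigma>)))"

definition avg_renyi2 :: "nat \<Rightarrow> nat \<Rightarrow> op \<Rightarrow> real" where
  "avg_renyi2 d n \<rho> = (\<Sum>A\<in>Pow (qudits n). renyi2 d A (reduced d n A \<rho>)) / 2 ^ n"

text \<open>Generalized Pauli operators: single qudit X^s Z^t, with
 X|k> = |k+1 mod d>, Z|k> = exp(2 pi i k/d)|k>, so <j|X^s Z^t|k> = [j = k+s mod d] w^(t k).\<close>
definition pauli1 :: "nat \<Rightarrow> nat \<times> nat \<Rightarrow> nat \<Rightarrow> nat \<Rightarrow> complex" where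
  "pauli1 d a j k = (if j = (k + fst a) mod d then cis (2 * pi * real (snd a * k) / real d) else 0)"

type_synonym pstring = "nat \<Rightarrow> nat \<times> nat"

definition pstrings :: "nat \<Rightarrow> nat \<Rightarrow> pstring set" where
  "pstrings d n = {a. (\<forall>i<n. fst (a i) < d \<and> snd (a i) < d) \<and> (\<forall>i\<ge>n. a i = (0,0))}"

definition pauli :: "nat \<Rightarrow> nat \<Rightarrow> pstring \<Rightarrow> op" where
  "pauli d n a = (\<lambda>x y. \<Prod>i<n. pauli1 d (a i) (x i) (y i))"

definition pweight :: "nat \<Rightarrow> pstring \<Rightarrow> nat" where
  "pweight n a = card {i. i < n \<and> a i \<noteq> (0,0)}"

definition norm2 :: "nat \<Rightarrow> nat \<Rightarrow> op \<Rightarrow> real" where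
  "norm2 d n A = sqrt (Re (tr d (qudits n) (mmul d (qudits n) (adj A) A)) / real d ^ n)"

definition pweightdist :: "nat \<Rightarrow> nat \<Rightarrow> op \<Rightarrow> pstring \<Rightarrow> real" where
  "pweightdist d n B a = (cmod (tr d (qudits n) (mmul d (qudits n) B (pauli d n a))))\<^sup>2 / real d ^ (2 * n)"

definition influence :: "nat \<Rightarrow> nat \<Rightarrow> op \<Rightarrow> real" where
  "influence d n B = (\<Sum>a\<in>pstrings d n. real (pweight n a) * pweightdist d n B a)"

definition conj_by :: "nat \<Rightarrow> nat \<Rightarrow> op \<Rightarrow> op \<Rightarrow> op" where
  "conj_by d n U B = mmul d (qudits n) (mmul d (qudits n) U B) (adj U)"

text \<open>Change in influence strength (the maximum over the compact unit sphere, as a supremum).\<close>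
definition CiS :: "nat \<Rightarrow> nat \<Rightarrow> op \<Rightarrow> real" where
  "CiS d n U = (SUP B\<in>{B. norm2 d n B = 1}. \<bar>influence d n (conj_by d n U B) - influence d n B\<bar>)"

end

(* Write E_i for the average over qudit i (partial trace over i, tensored with I/d) and
   Phi(B) = sum_i |B - E_i B|^2 in the Hilbert-Schmidt norm.  By Parseval for the Pauli
   basis the influence of B is Phi(B)/d^n, so CiS[U] = 0 means that conjugation by U
   preserves Phi.  For X acting on qudit i alone, Phi(X) = |X - tr X/d^n|^2, while every Y
   satisfies Phi(Y) >= |Y - tr Y/d^n|^2 + |(1 - E_j)(1 - E_l) Y|^2 for j ~= l.  Applied to
   U X U^dagger and to its square this forces U X U^dagger to act on a single qudit pi(i),
   with pi a permutation.  Conjugation by U then carries the partial average over S to the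
   partial average over pi(S), so U merely permutes the purities of the reduced states and
   the average Renyi-2 entropy is unchanged, for every operator rho. *)

theory Submission
  imports Defs "HOL-Library.Function_Algebras" "HOL-Library.FuncSet"
begin

section \<open>Basis configurations\<close>

lemma cfgs_empty: "cfgs d {} = {\<lambda>_. 0}"
  by (auto simp: cfgs_def)

lemma cfgs_insert:
  assumes "i \<notin> S"
  shows "cfgs d (insert i S) = (\<lambda>(t, z). z(i := t)) ` ({..<d} \<times> cfgs d S)"
proof (intro equalityI subsetI)
  fix w assume "w \<in> cfgs d (insert i S)"
  then have "(w i, w(i := 0)) \<in> {..<d} \<times> cfgs d S" and "w = (w(i := 0))(i := w i)"
    using assms by (auto simp: cfgs_def)
  then show "w \<in> (\<lambda>(t, z). z(i := t)) ` ({..<d} \<times> cfgs d S)"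
    by (metis (no_types, lifting) case_prod_conv image_eqI)
qed (use assms in \<open>auto simp: cfgs_def\<close>)

lemma inj_on_cfgs_insert:
  assumes "i \<notin> S"
  shows "inj_on (\<lambda>(t, z). z(i := t)) ({..<d} \<times> cfgs d S)"
proof (rule inj_onI, clarify)
  fix t z t' z' assume "z \<in> cfgs d S" "z' \<in> cfgs d S" "z(i := t) = z'(i := t')"
  moreover have "z i = 0" "z' i = 0"
    using assms \<open>z \<in> cfgs d S\<close> \<open>z' \<in> cfgs d S\<close> by (auto simp: cfgs_def)
  ultimately show "t = t' \<and> z = z'"
    by (metis fun_upd_idem fun_upd_same fun_upd_upd)
qed

lemma sum_cfgs_insert:
  assumes "i \<notin> S"
  shows "sum f (cfgs d (insert i S)) = (\<Sum>t<d. \<Sum>z\<in>cfgs d S. f (z(i := t)))"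
proof -
  have "sum f (cfgs d (insert i S)) = (\<Sum>(t, z)\<in>{..<d} \<times> cfgs d S. f (z(i := t)))"
    unfolding cfgs_insert[OF assms] by (subst sum.reindex[OF inj_on_cfgs_insert[OF assms]]) (simp add: split_def)
  then show ?thesis
    by (simp add: sum.cartesian_product)
qed

lemma finite_cfgs: "finite S \<Longrightarrow> finite (cfgs d S)"
  by (induction S rule: finite_induct) (simp_all add: cfgs_empty cfgs_insert)

lemma card_cfgs: "finite S \<Longrightarrow> card (cfgs d S) = d ^ card S"
proof (induction S rule: finite_induct)
  case (insert i S)
  then show ?case
    by (simp add: cfgs_insert card_image[OF inj_on_cfgs_insert] card_cartesian_product)
qed (simp add: cfgs_empty)

lemma sum_cfgs_merge:
  assumes "A \<inter> B = {}"
  shows "sum f (cfgs d (A \<union> B)) = (\<Sum>a\<in>cfgs d A. \<Sum>u\<in>cfgs d B. f (merge A a u))"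
proof -
  have "sum f (cfgs d (A \<union> B)) = (\<Sum>(a, u)\<in>cfgs d A \<times> cfgs d B. f (merge A a u))"
    by (rule sum.reindex_bij_witness[where i = "\<lambda>(a, u). merge A a u"
          and j = "\<lambda>w. (\<lambda>i. if i \<in> A then w i else 0, \<lambda>i. if i \<in> A then 0 else w i)"])
       (use assms in \<open>auto simp: cfgs_def merge_def fun_eq_iff disjoint_iff intro!: arg_cong[where f = f]\<close>)
  then show ?thesis
    by (simp add: sum.cartesian_product)
qed

section \<open>Roots of unity and Pauli orthogonality\<close>

lemma cnj_mult_self: "cnj z * z = complex_of_real ((cmod z)\<^sup>2)"
  by (metis complex_norm_square mult.commute)

lemma cis_root_ne_1:
  assumes "k < d" "k' < d" "k \<noteq> k'"
  shows "cis (2 * pi * (real k - real k') / real d) \<noteq> 1"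
proof
  assume "cis (2 * pi * (real k - real k') / real d) = 1"
  then have "cos (2 * pi * (real k - real k') / real d) = 1"
    by (metis Re_complex_of_real cis.sel(1) of_real_1)
  then obtain m :: int where "2 * pi * (real k - real k') / real d = real_of_int m * 2 * pi"
    using cos_one_2pi_int by blast
  then have "(2 * pi) * (real k - real k') = (2 * pi) * (real_of_int m * real d)"
    using assms by (simp add: divide_eq_eq algebra_simps)
  then have "real k - real k' = real_of_int m * real d"
    by simp
  then have "int k - int k' = m * int d"
    by (metis of_int_eq_iff of_int_mult of_int_diff of_int_of_nat_eq)
  moreover have "m \<noteq> 0"
    using assms(3) calculation by auto
  then have "int d \<le> \<bar>m\<bar> * int d"
    by (simp add: mult_le_cancel_right1 zero_less_abs_iff[symmetric] del: zero_less_abs_iff)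
  moreover have "\<bar>int k - int k'\<bar> < int d"
    using assms by simp
  ultimately show False
    by (simp add: abs_mult)
qed

lemma sum_roots_of_unity:
  assumes "0 < d" and k: "k < d" and k': "k' < d"
  shows "(\<Sum>t<d. cis (2 * pi * real (t * k) / real d) * cnj (cis (2 * pi * real (t * k') / real d)))
       = (if k = k' then of_nat d else 0)"
proof -
  define w where "w = cis (2 * pi * (real k - real k') / real d)"
  have "cis (2 * pi * real (t * k) / real d) * cnj (cis (2 * pi * real (t * k') / real d)) = w ^ t" for t
    unfolding w_def DeMoivre cis_cnj cis_mult
    by (rule arg_cong[where f = cis]) (simp add: diff_divide_distrib[symmetric] algebra_simps)
  moreover have "w ^ d = 1"
    using assms(1) cis_multiple_2pi[of "of_int (int k - int k')"] by (simp add: w_def DeMoivre)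
  ultimately show ?thesis
    using cis_root_ne_1[OF k k'] by (simp add: geometric_sum w_def)
qed

lemma add_mod_eq_iff:
  fixes d k s j :: nat
  assumes "s < d" "j < d" "k < d"
  shows "(k + s) mod d = j \<longleftrightarrow> s = (j + d - k) mod d"
proof -
  have "s = (k + s + (d - k)) mod d"
    using assms by simp
  also have "\<dots> = ((k + s) mod d + (d - k)) mod d"
    by (simp add: mod_add_left_eq)
  finally have "s = ((k + s) mod d + (d - k)) mod d" .
  moreover have "(k + (j + d - k) mod d) mod d = j"
    using assms by (simp add: mod_add_right_eq)
  ultimately show ?thesis
    using assms by auto
qed

lemma pauli1_orthogonality:
  assumes d: "0 < d" and j: "j < d" and k: "k < d" and j': "j' < d" and k': "k' < d"
  shows "(\<Sum>s<d. \<Sum>t<d. pauli1 d (s, t) j k * cnj (pauli1 d (s, t) j' k'))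
       = (if j = j' \<and> k = k' then of_nat d else 0)"
proof -
  have "(\<Sum>s<d. \<Sum>t<d. pauli1 d (s, t) j k * cnj (pauli1 d (s, t) j' k'))
      = (\<Sum>s<d. if j = (k + s) mod d \<and> j' = (k' + s) mod d then (if k = k' then of_nat d else 0) else 0)"
    by (intro sum.cong refl) (auto simp: pauli1_def sum_roots_of_unity[OF d k k'] simp del: of_nat_mult)
  also have "\<dots> = (\<Sum>s<d. if s = (j + d - k) mod d \<and> j = j' \<and> k = k' then of_nat d else 0)"
  proof (intro sum.cong refl)
    fix s assume "s \<in> {..<d}"
    then have "j = (k + s) mod d \<longleftrightarrow> s = (j + d - k) mod d" "j' = (k' + s) mod d \<longleftrightarrow> s = (j' + d - k') mod d"
      using add_mod_eq_iff[of s d j k] add_mod_eq_iff[of s d j' k'] j k j' k' by auto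
    then show "(if j = (k + s) mod d \<and> j' = (k' + s) mod d then (if k = k' then of_nat d else 0) else 0)
        = (if s = (j + d - k) mod d \<and> j = j' \<and> k = k' then of_nat d else (0::complex))"
      by auto
  qed
  also have "\<dots> = (if j = j' \<and> k = k' then of_nat d else 0)"
    using d by (auto simp: sum.If_cases)
  finally show ?thesis .
qed

lemma sum_pstrings_prod:
  fixes g :: "nat \<Rightarrow> nat \<times> nat \<Rightarrow> complex"
  shows "(\<Sum>a\<in>pstrings d n. \<Prod>i<n. g i (a i)) = (\<Prod>i<n. \<Sum>s<d. \<Sum>t<d. g i (s, t))"
proof -
  have "(\<Sum>a\<in>pstrings d n. \<Prod>i<n. g i (a i)) = (\<Sum>a\<in>PiE {..<n} (\<lambda>_. {..<d} \<times> {..<d}). \<Prod>i<n. g i (a i))"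
    by (rule sum.reindex_bij_witness[where i = "\<lambda>a i. if i < n then a i else (0, 0)" and j = "\<lambda>a. restrict a {..<n}"])
       (auto simp: pstrings_def PiE_def Pi_iff extensional_def fun_eq_iff mem_Times_iff)
  also have "\<dots> = (\<Prod>i<n. \<Sum>p\<in>{..<d} \<times> {..<d}. g i p)"
    by (rule prod_sum_PiE[symmetric]) auto
  finally show ?thesis
    by (simp add: sum.cartesian_product)
qed

lemma prod_if_const:
  fixes c :: "'a :: comm_semiring_1"
  shows "(\<Prod>i<n. if P i then c else 0) = (if \<forall>i<n. P i then c ^ n else 0)"
  by (induction n) (auto simp: less_Suc_eq mult.commute)

lemma parseval_from_completeness:
  fixes c :: "'q \<Rightarrow> complex" and P :: "'a \<Rightarrow> 'q \<Rightarrow> complex"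
  assumes "finite Q"
    and complete: "\<And>q q'. q \<in> Q \<Longrightarrow> q' \<in> Q \<Longrightarrow> (\<Sum>a\<in>A. P a q * cnj (P a q')) = (if q = q' then of_real K else 0)"
  shows "(\<Sum>a\<in>A. (cmod (\<Sum>q\<in>Q. c q * P a q))\<^sup>2) = K * (\<Sum>q\<in>Q. (cmod (c q))\<^sup>2)"
proof -
  have "complex_of_real (\<Sum>a\<in>A. (cmod (\<Sum>q\<in>Q. c q * P a q))\<^sup>2)
      = (\<Sum>a\<in>A. \<Sum>q\<in>Q. \<Sum>q'\<in>Q. c q * cnj (c q') * (P a q * cnj (P a q')))"
    unfolding of_real_sum complex_norm_square by (simp add: cnj_sum sum_product mult_ac)
  also have "\<dots> = (\<Sum>q\<in>Q. \<Sum>q'\<in>Q. c q * cnj (c q') * (\<Sum>a\<in>A. P a q * cnj (P a q')))"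
    by (simp add: sum_distrib_left sum.swap[of _ A])
  also have "\<dots> = (\<Sum>q\<in>Q. c q * cnj (c q) * of_real K)"
    using assms(1) by (simp add: complete if_distrib[of "\<lambda>u. _ * u"] cong: if_cong)
  also have "\<dots> = complex_of_real (K * (\<Sum>q\<in>Q. (cmod (c q))\<^sup>2))"
    unfolding of_real_mult of_real_sum complex_norm_square by (simp add: sum_distrib_left mult_ac)
  finally show ?thesis
    using of_real_eq_iff by blast
qed

section \<open>Operators on the qudit register\<close>

locale qudit_register =
  fixes d n :: nat
  assumes two_le_d: "2 \<le> d"
begin

abbreviation sites :: "nat set" where "sites \<equiv> qudits n"

abbreviation basis :: "cfg set" where "basis \<equiv> cfgs d sites"

(* Operators are functions on all pairs of digit functions; only their entries on
   basis \<times> basis are meaningful, and clip resets all other entries to 0. *)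
definition supported :: "op \<Rightarrow> bool" where
  "supported B \<longleftrightarrow> (\<forall>x y. x \<notin> basis \<or> y \<notin> basis \<longrightarrow> B x y = 0)"

definition clip :: "op \<Rightarrow> op" where
  "clip B = (\<lambda>x y. if x \<in> basis \<and> y \<in> basis then B x y else 0)"

definition opmul :: "op \<Rightarrow> op \<Rightarrow> op" (infixl \<open>\<star>\<close> 70) where
  "A \<star> B = (\<lambda>x y. if x \<in> basis \<and> y \<in> basis then \<Sum>z\<in>basis. A x z * B z y else 0)"

definition Iop :: op where
  "Iop = (\<lambda>x y. if x \<in> basis \<and> y \<in> basis \<and> x = y then 1 else 0)"

definition scale :: "complex \<Rightarrow> op \<Rightarrow> op" where
  "scale c B = (\<lambda>x y. c * B x y)"

definition trace :: "op \<Rightarrow> complex" where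
  "trace B = (\<Sum>x\<in>basis. B x x)"

definition hs_inner :: "op \<Rightarrow> op \<Rightarrow> complex" where
  "hs_inner A B = (\<Sum>x\<in>basis. \<Sum>y\<in>basis. cnj (A x y) * B x y)"

definition hs_sq :: "op \<Rightarrow> real" where
  "hs_sq B = (\<Sum>x\<in>basis. \<Sum>y\<in>basis. (cmod (B x y))\<^sup>2)"

lemma d_pos: "0 < d"
  using two_le_d by simp

lemma finite_basis: "finite basis"
  by (simp add: finite_cfgs qudits_def)

lemma zero_in_basis: "(\<lambda>_. 0) \<in> basis"
  using d_pos by (simp add: cfgs_def)

lemma basis_upd: "x \<in> basis \<Longrightarrow> i < n \<Longrightarrow> t < d \<Longrightarrow> x(i := t) \<in> basis"
  by (auto simp: cfgs_def qudits_def)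

lemma basis_less: "x \<in> basis \<Longrightarrow> x i < d"
  using d_pos by (cases "i < n") (auto simp: cfgs_def qudits_def)

lemma basis_outside: "x \<in> basis \<Longrightarrow> n \<le> i \<Longrightarrow> x i = 0"
  by (auto simp: cfgs_def qudits_def)

lemma supported_eqI:
  "supported A \<Longrightarrow> supported B \<Longrightarrow> (\<And>x y. x \<in> basis \<Longrightarrow> y \<in> basis \<Longrightarrow> A x y = B x y) \<Longrightarrow> A = B"
  unfolding supported_def by (intro ext) metis

lemma supported_clip [simp]: "supported (clip B)"
  by (simp add: supported_def clip_def)

lemma supported_opmul [simp]: "supported (A \<star> B)"
  by (simp add: supported_def opmul_def)

lemma supported_Iop [simp]: "supported Iop"
  by (simp add: supported_def Iop_def)

lemma supported_zero [simp]: "supported 0"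
  by (simp add: supported_def)

lemma supported_add [simp]: "supported A \<Longrightarrow> supported B \<Longrightarrow> supported (A + B)"
  by (simp add: supported_def)

lemma supported_diff [simp]: "supported A \<Longrightarrow> supported B \<Longrightarrow> supported (A - B)"
  by (simp add: supported_def)

lemma supported_scale [simp]: "supported B \<Longrightarrow> supported (scale c B)"
  by (simp add: supported_def scale_def)

lemma supported_adj [simp]: "supported B \<Longrightarrow> supported (adj B)"
  by (auto simp: supported_def adj_def)

lemma clip_supported: "supported B \<Longrightarrow> clip B = B"
  by (auto simp: supported_def clip_def fun_eq_iff)

lemma opmul_assoc: "A \<star> B \<star> D = A \<star> (B \<star> D)"
proof -
  have "(\<Sum>z\<in>basis. (\<Sum>w\<in>basis. A x w * B w z) * D z y) = (\<Sum>w\<in>basis. A x w * (\<Sum>z\<in>basis. B w z * D z y))" for x y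
    by (simp add: sum_distrib_left sum_distrib_right mult.assoc) (rule sum.swap)
  then show ?thesis
    by (auto simp: opmul_def fun_eq_iff intro!: sum.cong)
qed

lemma Iop_opmul: "Iop \<star> A = clip A"
  by (intro ext) (simp add: opmul_def Iop_def clip_def if_distrib[of "\<lambda>c. c * _"] finite_basis cong: if_cong)

lemma opmul_Iop: "A \<star> Iop = clip A"
  by (intro ext) (simp add: opmul_def Iop_def clip_def if_distrib[of "\<lambda>c. _ * c"] finite_basis cong: if_cong)

lemma opmul_clip_left [simp]: "clip A \<star> B = A \<star> B"
  by (auto simp: opmul_def clip_def fun_eq_iff intro!: sum.cong)

lemma opmul_clip_right [simp]: "A \<star> clip B = A \<star> B"
  by (auto simp: opmul_def clip_def fun_eq_iff intro!: sum.cong)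

lemma opmul_add_left: "(A + B) \<star> D = A \<star> D + B \<star> D"
  by (auto simp: opmul_def fun_eq_iff distrib_right sum.distrib)

lemma opmul_add_right: "D \<star> (A + B) = D \<star> A + D \<star> B"
  by (auto simp: opmul_def fun_eq_iff distrib_left sum.distrib)

lemma opmul_diff_left: "(A - B) \<star> D = A \<star> D - B \<star> D"
  by (auto simp: opmul_def fun_eq_iff left_diff_distrib sum_subtractf)

lemma opmul_diff_right: "D \<star> (A - B) = D \<star> A - D \<star> B"
  by (auto simp: opmul_def fun_eq_iff right_diff_distrib sum_subtractf)

lemma opmul_scale_left: "scale c A \<star> D = scale c (A \<star> D)"
  by (auto simp: opmul_def scale_def fun_eq_iff sum_distrib_left mult.assoc)

lemma opmul_scale_right: "D \<star> scale c A = scale c (D \<star> A)"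
  by (auto simp: opmul_def scale_def fun_eq_iff sum_distrib_left mult.left_commute)

lemma opmul_zero [simp]: "A \<star> 0 = 0" "0 \<star> A = 0"
  by (auto simp: opmul_def fun_eq_iff)

lemma adj_adj [simp]: "adj (adj A) = A"
  by (simp add: adj_def)

lemma adj_opmul: "adj (A \<star> B) = adj B \<star> adj A"
  by (auto simp: adj_def opmul_def fun_eq_iff mult.commute)

lemma trace_opmul_commute: "trace (A \<star> B) = trace (B \<star> A)"
  unfolding trace_def opmul_def by (simp add: mult.commute) (rule sum.swap)

lemma trace_clip [simp]: "trace (clip A) = trace A"
  by (simp add: trace_def clip_def)

lemma trace_scale: "trace (scale c A) = c * trace A"
  by (simp add: trace_def scale_def sum_distrib_left)

lemma hs_inner_trace: "hs_inner A B = trace (adj A \<star> B)"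
  unfolding hs_inner_def trace_def opmul_def adj_def by simp (rule sum.swap)

lemma hs_inner_self: "hs_inner B B = of_real (hs_sq B)"
  unfolding hs_inner_def hs_sq_def by (simp add: cnj_mult_self)

lemma hs_sq_nonneg: "0 \<le> hs_sq B"
  unfolding hs_sq_def by (intro sum_nonneg) auto

lemma hs_sq_zero [simp]: "hs_sq 0 = 0"
  by (simp add: hs_sq_def)

lemma hs_sq_clip [simp]: "hs_sq (clip B) = hs_sq B"
  by (simp add: hs_sq_def clip_def)

lemma hs_sq_diff_clip: "hs_sq (clip A - B) = hs_sq (A - B)"
  by (simp add: hs_sq_def clip_def)

lemma hs_sq_eq_0_iff: "supported B \<Longrightarrow> hs_sq B = 0 \<longleftrightarrow> B = 0"
  unfolding hs_sq_def
  by (auto simp: sum_nonneg_eq_0_iff sum_nonneg finite_basis supported_def fun_eq_iff)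

lemma hs_sq_pos: "supported B \<Longrightarrow> B \<noteq> 0 \<Longrightarrow> 0 < hs_sq B"
  using hs_sq_eq_0_iff hs_sq_nonneg by (metis less_eq_real_def)

lemma hs_inner_zero_left [simp]: "hs_inner 0 B = 0"
  by (simp add: hs_inner_def)

lemma hs_inner_add_right: "hs_inner D (A + B) = hs_inner D A + hs_inner D B"
  by (simp add: hs_inner_def distrib_left sum.distrib)

lemma hs_inner_add_left: "hs_inner (A + B) D = hs_inner A D + hs_inner B D"
  by (simp add: hs_inner_def distrib_right sum.distrib)

lemma hs_inner_commute: "hs_inner B A = cnj (hs_inner A B)"
  by (simp add: hs_inner_def mult.commute)

lemma hs_sq_add: "hs_sq (A + B) = hs_sq A + hs_sq B + 2 * Re (hs_inner A B)"
proof -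
  have "complex_of_real (hs_sq (A + B)) = hs_inner A A + hs_inner B B + (hs_inner A B + cnj (hs_inner A B))"
    by (simp add: hs_inner_self[symmetric] hs_inner_add_left hs_inner_add_right hs_inner_commute[of A B])
  also have "\<dots> = of_real (hs_sq A + hs_sq B + 2 * Re (hs_inner A B))"
    by (simp add: hs_inner_self complex_add_cnj)
  finally show ?thesis
    using of_real_eq_iff by blast
qed

lemma hs_sq_add_orthogonal: "hs_inner A B = 0 \<Longrightarrow> hs_sq (A + B) = hs_sq A + hs_sq B"
  by (simp add: hs_sq_add)

lemma hs_sq_scale: "hs_sq (scale c B) = (cmod c)\<^sup>2 * hs_sq B"
  by (simp add: hs_sq_def scale_def norm_mult power_mult_distrib sum_distrib_left)

definition unitary_op :: "op \<Rightarrow> bool" where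
  "unitary_op V \<longleftrightarrow> supported V \<and> V \<star> adj V = Iop \<and> adj V \<star> V = Iop"

definition Ad :: "op \<Rightarrow> op \<Rightarrow> op" where
  "Ad V B = V \<star> B \<star> adj V"

lemma supported_Ad [simp]: "supported (Ad V B)"
  by (simp add: Ad_def)

lemma unitary_op_adj: "unitary_op V \<Longrightarrow> unitary_op (adj V)"
  by (auto simp: unitary_op_def)

lemma Ad_clip [simp]: "Ad V (clip B) = Ad V B"
  by (simp add: Ad_def)

lemma unitary_op_cancel:
  assumes "unitary_op V"
  shows "adj V \<star> (V \<star> A) = clip A" "V \<star> (adj V \<star> A) = clip A"
  using assms by (simp_all add: unitary_op_def Iop_opmul flip: opmul_assoc)

lemma Ad_opmul: "unitary_op V \<Longrightarrow> Ad V (X \<star> Y) = Ad V X \<star> Ad V Y"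
  by (simp add: Ad_def opmul_assoc unitary_op_cancel)

lemma Ad_add: "Ad V (A + B) = Ad V A + Ad V B"
  by (simp add: Ad_def opmul_add_left opmul_add_right)

lemma Ad_diff: "Ad V (A - B) = Ad V A - Ad V B"
  by (simp add: Ad_def opmul_diff_left opmul_diff_right)

lemma Ad_scale: "Ad V (scale c A) = scale c (Ad V A)"
  by (simp add: Ad_def opmul_scale_left opmul_scale_right)

lemma Ad_zero [simp]: "Ad V 0 = 0"
  by (simp add: Ad_def)

lemma Ad_Iop: "unitary_op V \<Longrightarrow> Ad V Iop = Iop"
  by (simp add: Ad_def opmul_Iop unitary_op_def)

lemma adj_Ad: "adj (Ad V B) = Ad V (adj B)"
  by (simp add: Ad_def adj_opmul opmul_assoc)

lemma trace_Ad:
  assumes "unitary_op V"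
  shows "trace (Ad V B) = trace B"
proof -
  have "trace (Ad V B) = trace (B \<star> (adj V \<star> V))"
    by (simp add: Ad_def opmul_assoc trace_opmul_commute[of V])
  then show ?thesis
    using assms by (simp add: unitary_op_def opmul_Iop)
qed

lemma hs_inner_Ad: "unitary_op V \<Longrightarrow> hs_inner (Ad V A) (Ad V B) = hs_inner A B"
  by (simp add: hs_inner_trace adj_Ad Ad_opmul[symmetric] trace_Ad)

lemma hs_sq_Ad: "unitary_op V \<Longrightarrow> hs_sq (Ad V B) = hs_sq B"
  using hs_inner_Ad[of V B B] by (simp add: hs_inner_self)

lemma Ad_adj_Ad: "unitary_op V \<Longrightarrow> Ad (adj V) (Ad V B) = clip B"
  by (simp add: Ad_def opmul_assoc unitary_op_cancel) (simp add: unitary_op_def opmul_Iop)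

lemma Ad_Ad_adj: "unitary_op V \<Longrightarrow> Ad V (Ad (adj V) B) = clip B"
  using Ad_adj_Ad[OF unitary_op_adj] by simp

section \<open>Averages over qudits\<close>

(* avg i is E_i: partial trace over qudit i, tensored with I/d. *)
definition avg :: "nat \<Rightarrow> op \<Rightarrow> op" where
  "avg i B = (\<lambda>x y. if x \<in> basis \<and> y \<in> basis \<and> x i = y i
     then (\<Sum>t<d. B (x(i := t)) (y(i := t))) / of_nat d else 0)"

definition dev :: "nat \<Rightarrow> op \<Rightarrow> op" where
  "dev i B = B - avg i B"

abbreviation basis_without :: "nat \<Rightarrow> cfg set" where
  "basis_without i \<equiv> cfgs d (sites - {i})"

lemma sum_basis_site:
  assumes "i < n"
  shows "sum f basis = (\<Sum>t<d. \<Sum>z\<in>basis_without i. f (z(i := t)))"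
proof -
  have "sites = insert i (sites - {i})"
    using assms by (auto simp: qudits_def)
  then have "sum f basis = sum f (cfgs d (insert i (sites - {i})))"
    by simp
  also have "\<dots> = (\<Sum>t<d. \<Sum>z\<in>basis_without i. f (z(i := t)))"
    by (rule sum_cfgs_insert) simp
  finally show ?thesis .
qed

lemma basis_without_site: "z \<in> basis_without i \<Longrightarrow> z i = 0"
  by (auto simp: cfgs_def)

lemma basis_without_upd: "z \<in> basis_without i \<Longrightarrow> i < n \<Longrightarrow> t < d \<Longrightarrow> z(i := t) \<in> basis"
  by (auto simp: cfgs_def qudits_def)

lemma sum_basis_pairs_site:
  assumes "i < n"
  shows "(\<Sum>x\<in>basis. \<Sum>y\<in>basis. if x i = y i then g x y else 0)
       = (\<Sum>z\<in>basis_without i. \<Sum>w\<in>basis_without i. \<Sum>t<d. g (z(i := t)) (w(i := t)))"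
proof -
  have "(\<Sum>x\<in>basis. \<Sum>y\<in>basis. if x i = y i then g x y else 0)
      = (\<Sum>t<d. \<Sum>z\<in>basis_without i. \<Sum>s<d. \<Sum>w\<in>basis_without i. if t = s then g (z(i := t)) (w(i := s)) else 0)"
    by (simp add: sum_basis_site[OF assms])
  also have "\<dots> = (\<Sum>t<d. \<Sum>z\<in>basis_without i. \<Sum>w\<in>basis_without i. \<Sum>s<d. if t = s then g (z(i := t)) (w(i := s)) else 0)"
    by (intro sum.cong refl) (rule sum.swap)
  also have "\<dots> = (\<Sum>t<d. \<Sum>z\<in>basis_without i. \<Sum>w\<in>basis_without i. g (z(i := t)) (w(i := t)))"
    by simp
  also have "\<dots> = (\<Sum>z\<in>basis_without i. \<Sum>t<d. \<Sum>w\<in>basis_without i. g (z(i := t)) (w(i := t)))"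
    by (rule sum.swap)
  also have "\<dots> = (\<Sum>z\<in>basis_without i. \<Sum>w\<in>basis_without i. \<Sum>t<d. g (z(i := t)) (w(i := t)))"
    by (intro sum.cong refl) (rule sum.swap)
  finally show ?thesis .
qed

lemma supported_avg [simp]: "supported (avg i B)"
  by (simp add: supported_def avg_def)

lemma supported_dev [simp]: "supported B \<Longrightarrow> supported (dev i B)"
  by (simp add: dev_def)

lemma avg_apply:
  "x \<in> basis \<Longrightarrow> y \<in> basis \<Longrightarrow>
   avg i B x y = (if x i = y i then (\<Sum>t<d. B (x(i := t)) (y(i := t))) / of_nat d else 0)"
  by (simp add: avg_def)

lemma avg_eq_self_iff:
  assumes "i < n" and "supported X"
  shows "avg i X = X \<longleftrightarrow>
    (\<forall>x\<in>basis. \<forall>y\<in>basis. X x y = (if x i = y i then X (x(i := 0)) (y(i := 0)) else 0))"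
proof
  assume fixed: "avg i X = X"
  show "\<forall>x\<in>basis. \<forall>y\<in>basis. X x y = (if x i = y i then X (x(i := 0)) (y(i := 0)) else 0)"
  proof (intro ballI)
    fix x y assume xy: "x \<in> basis" "y \<in> basis"
    have "X x y = avg i X x y" "X (x(i := 0)) (y(i := 0)) = avg i X (x(i := 0)) (y(i := 0))"
      by (simp_all only: fixed)
    with xy assms(1) d_pos show "X x y = (if x i = y i then X (x(i := 0)) (y(i := 0)) else 0)"
      by (simp add: avg_apply basis_upd)
  qed
next
  assume X: "\<forall>x\<in>basis. \<forall>y\<in>basis. X x y = (if x i = y i then X (x(i := 0)) (y(i := 0)) else 0)"
  have "avg i X x y = X x y" if xy: "x \<in> basis" "y \<in> basis" for x y
  proof -
    have "(\<Sum>t<d. X (x(i := t)) (y(i := t))) = (\<Sum>t<d. X (x(i := 0)) (y(i := 0)))"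
    proof (rule sum.cong[OF refl])
      fix t assume "t \<in> {..<d}"
      then have "x(i := t) \<in> basis" "y(i := t) \<in> basis"
        using xy assms(1) by (simp_all add: basis_upd)
      then show "X (x(i := t)) (y(i := t)) = X (x(i := 0)) (y(i := 0))"
        using X by simp
    qed
    moreover note X[rule_format, OF xy]
    ultimately show ?thesis
      using xy d_pos by (simp add: avg_apply)
  qed
  then show "avg i X = X"
    using assms(2) by (intro supported_eqI) simp_all
qed

lemma avg_idem: "i < n \<Longrightarrow> avg i (avg i B) = avg i B"
  using d_pos by (subst avg_eq_self_iff) (auto simp: avg_apply basis_upd)

lemma avg_commute:
  assumes "i < n" "k < n"
  shows "avg i (avg k B) = avg k (avg i B)"
proof (cases "i = k")
  case False
  show ?thesis
  proof (rule supported_eqI)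
    fix x y assume "x \<in> basis" "y \<in> basis"
    have "(\<Sum>t<d. (\<Sum>s<d. B (x(i := t, k := s)) (y(i := t, k := s))) / of_nat d)
        = (\<Sum>s<d. (\<Sum>t<d. B (x(k := s, i := t)) (y(k := s, i := t))) / of_nat d)"
      using False by (simp add: sum_divide_distrib fun_upd_twist) (rule sum.swap)
    then show "avg i (avg k B) x y = avg k (avg i B) x y"
      using assms False \<open>x \<in> basis\<close> \<open>y \<in> basis\<close>
      by (auto simp: avg_apply basis_upd sum_divide_distrib[symmetric])
  qed simp_all
qed simp

lemma avg_add: "avg i (A + B) = avg i A + avg i B"
  by (auto simp: avg_def fun_eq_iff sum.distrib add_divide_distrib)

lemma avg_diff: "avg i (A - B) = avg i A - avg i B"
  by (auto simp: avg_def fun_eq_iff sum_subtractf diff_divide_distrib)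

lemma avg_scale: "avg i (scale c B) = scale c (avg i B)"
  by (auto simp: avg_def scale_def fun_eq_iff sum_distrib_left)

lemma avg_zero [simp]: "avg i 0 = 0"
  by (auto simp: avg_def fun_eq_iff)

lemma avg_clip: "i < n \<Longrightarrow> avg i (clip B) = avg i B"
  by (auto simp: avg_def clip_def fun_eq_iff basis_upd basis_less intro!: sum.cong)

lemma avg_adj: "avg i (adj B) = adj (avg i B)"
  by (auto simp: avg_def adj_def fun_eq_iff)

lemma avg_Iop:
  assumes "i < n"
  shows "avg i Iop = Iop"
proof (subst avg_eq_self_iff[OF assms supported_Iop], intro ballI)
  fix x y assume "x \<in> basis" "y \<in> basis"
  have "x = y \<longleftrightarrow> x i = y i \<and> x(i := 0) = y(i := 0)"
    by (metis fun_upd_triv fun_upd_upd)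
  then show "Iop x y = (if x i = y i then Iop (x(i := 0)) (y(i := 0)) else 0)"
    using \<open>x \<in> basis\<close> \<open>y \<in> basis\<close> assms d_pos by (auto simp: Iop_def basis_upd)
qed

lemma trace_avg:
  assumes "i < n"
  shows "trace (avg i B) = trace B"
proof -
  have "trace (avg i B) = (\<Sum>t<d. \<Sum>z\<in>basis_without i. (\<Sum>s<d. B (z(i := s)) (z(i := s))) / of_nat d)"
    unfolding trace_def by (simp add: sum_basis_site[OF assms] avg_apply basis_without_upd assms)
  also have "\<dots> = (\<Sum>z\<in>basis_without i. \<Sum>s<d. B (z(i := s)) (z(i := s)))"
    using d_pos by (simp add: sum_divide_distrib[symmetric])
  also have "\<dots> = (\<Sum>s<d. \<Sum>z\<in>basis_without i. B (z(i := s)) (z(i := s)))"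
    by (rule sum.swap)
  also have "\<dots> = trace B"
    unfolding trace_def by (simp add: sum_basis_site[OF assms])
  finally show ?thesis .
qed

lemma hs_inner_avg:
  assumes "i < n"
  shows "hs_inner (avg i A) B = hs_inner A (avg i B)"
proof -
  have avg_left: "(\<Sum>s<d. cnj ((\<Sum>t<d. a t) / of_nat d) * b s) = cnj (\<Sum>t<d. a t) * (\<Sum>s<d. b s) / of_nat d"
    and avg_right: "(\<Sum>s<d. cnj (a s) * ((\<Sum>t<d. b t) / of_nat d)) = cnj (\<Sum>t<d. a t) * (\<Sum>s<d. b s) / of_nat d"
    for a b :: "nat \<Rightarrow> complex"
    by (simp_all add: sum_divide_distrib[symmetric] sum_distrib_left[symmetric] sum_distrib_right[symmetric] cnj_sum)
  have "hs_inner (avg i A) B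
      = (\<Sum>x\<in>basis. \<Sum>y\<in>basis. if x i = y i then cnj ((\<Sum>t<d. A (x(i := t)) (y(i := t))) / of_nat d) * B x y else 0)"
    unfolding hs_inner_def by (intro sum.cong refl) (simp add: avg_apply)
  also have "\<dots> = (\<Sum>z\<in>basis_without i. \<Sum>w\<in>basis_without i.
      cnj (\<Sum>t<d. A (z(i := t)) (w(i := t))) * (\<Sum>s<d. B (z(i := s)) (w(i := s))) / of_nat d)"
    by (simp only: sum_basis_pairs_site[OF assms] fun_upd_upd avg_left)
  also have "\<dots> = (\<Sum>x\<in>basis. \<Sum>y\<in>basis. if x i = y i then cnj (A x y) * ((\<Sum>t<d. B (x(i := t)) (y(i := t))) / of_nat d) else 0)"
    by (simp only: sum_basis_pairs_site[OF assms] fun_upd_upd avg_right)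
  also have "\<dots> = hs_inner A (avg i B)"
    unfolding hs_inner_def by (intro sum.cong refl) (simp add: avg_apply)
  finally show ?thesis .
qed

lemma opmul_apply_avg_fixed:
  assumes i: "i < n" and fixed: "avg i X = X" and x: "x \<in> basis" and y: "y \<in> basis"
  shows "(X \<star> B) x y = (\<Sum>z\<in>basis_without i. X (x(i := 0)) z * B (z(i := x i)) y)"
proof -
  have X: "X x (z(i := t)) = (if x i = t then X (x(i := 0)) z else 0)"
    if "z \<in> basis_without i" "t < d" for z t
  proof -
    have "z(i := t) \<in> basis" "(z(i := t))(i := 0) = z"
      using that i basis_without_upd basis_without_site by auto
    then show ?thesis
      using x fixed avg_eq_self_iff[OF i, of X] by (metis fun_upd_same supported_avg)
  qed
  have "(X \<star> B) x y = (\<Sum>t<d. \<Sum>z\<in>basis_without i. X x (z(i := t)) * B (z(i := t)) y)"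
    using x y by (simp add: opmul_def sum_basis_site[OF i])
  also have "\<dots> = (\<Sum>t<d. \<Sum>z\<in>basis_without i. if t = x i then X (x(i := 0)) z * B (z(i := t)) y else 0)"
    by (intro sum.cong refl) (auto simp: X)
  also have "\<dots> = (\<Sum>z\<in>basis_without i. X (x(i := 0)) z * B (z(i := x i)) y)"
    using basis_less[OF x] by (subst sum.swap) simp
  finally show ?thesis .
qed

lemma avg_opmul_left:
  assumes i: "i < n" and fixed: "avg i X = X"
  shows "avg i (X \<star> B) = X \<star> avg i B"
proof (rule supported_eqI)
  fix x y assume x: "x \<in> basis" and y: "y \<in> basis"
  let ?S = "\<lambda>z. (\<Sum>t<d. B (z(i := t)) (y(i := t))) / of_nat d"
  have "avg i (X \<star> B) x y
      = (if x i = y i then (\<Sum>t<d. \<Sum>z\<in>basis_without i. X (x(i := 0)) z * B (z(i := t)) (y(i := t))) / of_nat d else 0)"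
    using x y i by (simp add: avg_apply basis_upd opmul_apply_avg_fixed[OF i fixed])
  also have "\<dots> = (\<Sum>z\<in>basis_without i. X (x(i := 0)) z * (if x i = y i then ?S z else 0))"
    by (auto simp: sum_distrib_left sum_divide_distrib intro: sum.swap)
  also have "\<dots> = (X \<star> avg i B) x y"
    using x y i by (simp add: opmul_apply_avg_fixed[OF i fixed] avg_apply basis_without_upd basis_less)
       (intro sum.cong refl, simp)
  finally show "avg i (X \<star> B) x y = (X \<star> avg i B) x y" .
qed simp_all

lemma avg_opmul_right:
  assumes "i < n" and "avg i X = X"
  shows "avg i (B \<star> X) = avg i B \<star> X"
proof -
  have "avg i (adj X) = adj X"
    using assms(2) by (simp add: avg_adj)
  then have "adj (avg i (B \<star> X)) = adj (avg i B \<star> X)"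
    by (simp add: avg_adj[symmetric] adj_opmul avg_opmul_left[OF assms(1)])
  then show ?thesis
    by (metis adj_adj)
qed

lemma avg_dev [simp]: "i < n \<Longrightarrow> avg i (dev i B) = 0"
  by (simp add: dev_def avg_diff avg_idem)

lemma dev_eq_0_iff: "supported B \<Longrightarrow> dev i B = 0 \<longleftrightarrow> avg i B = B"
  by (metis dev_def eq_iff_diff_eq_0)

lemma hs_inner_dev_avg: "i < n \<Longrightarrow> hs_inner (dev i A) (avg i B) = 0"
  by (subst hs_inner_avg[symmetric]) (simp_all add: hs_inner_def)

lemma hs_sq_avg_dev:
  assumes "i < n"
  shows "hs_sq B = hs_sq (avg i B) + hs_sq (dev i B)"
proof -
  have "hs_inner (avg i B) (dev i B) = 0"
    using hs_inner_dev_avg[OF assms, of B B] by (metis hs_inner_commute complex_cnj_zero)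
  then show ?thesis
    by (metis hs_sq_add_orthogonal dev_def add.commute diff_add_cancel)
qed

lemma hs_sq_avg_le: "i < n \<Longrightarrow> hs_sq (avg i B) \<le> hs_sq B"
  using hs_sq_avg_dev hs_sq_nonneg by (metis le_add_same_cancel1)

lemma hs_sq_dev_le: "i < n \<Longrightarrow> hs_sq (dev i B) \<le> hs_sq B"
  using hs_sq_avg_dev hs_sq_nonneg by (metis le_add_same_cancel2)

definition avg_sites :: "nat set \<Rightarrow> op \<Rightarrow> op" where
  "avg_sites S B = (\<lambda>x y. if x \<in> basis \<and> y \<in> basis \<and> (\<forall>k\<in>S. x k = y k)
     then (\<Sum>z\<in>cfgs d S. B (merge S z x) (merge S z y)) / of_nat d ^ card S else 0)"

lemma supported_avg_sites [simp]: "supported (avg_sites S B)"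
  by (simp add: supported_def avg_sites_def)

lemma avg_sites_empty: "avg_sites {} B = clip B"
  by (auto simp: avg_sites_def clip_def fun_eq_iff cfgs_empty merge_def)

lemma avg_sites_insert:
  assumes i: "i < n" and iS: "i \<notin> S" and S: "S \<subseteq> sites"
  shows "avg_sites (insert i S) B = avg i (avg_sites S B)"
proof (rule supported_eqI)
  fix x y assume x: "x \<in> basis" and y: "y \<in> basis"
  have fin: "finite S"
    using S finite_subset by (auto simp: qudits_def)
  have merge_upd: "merge (insert i S) (z(i := t)) w = merge S z (w(i := t))" for z t w
    using iS by (auto simp: merge_def fun_eq_iff)
  show "avg_sites (insert i S) B x y = avg i (avg_sites S B) x y"
  proof (cases "x i = y i \<and> (\<forall>k\<in>S. x k = y k)")
    case True
    then have "\<forall>k\<in>S. (x(i := t)) k = (y(i := t)) k" for t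
      by simp
    then have "avg i (avg_sites S B) x y
        = (\<Sum>t<d. \<Sum>z\<in>cfgs d S. B (merge (insert i S) (z(i := t)) x) (merge (insert i S) (z(i := t)) y))
          / (of_nat d ^ card S * of_nat d)"
      using True x y i by (simp add: avg_apply avg_sites_def basis_upd merge_upd sum_divide_distrib)
    also have "\<dots> = avg_sites (insert i S) B x y"
      using True x y fin iS by (simp add: avg_sites_def sum_cfgs_insert mult.commute)
    finally show ?thesis
      by simp
  next
    case False
    then show ?thesis
      using x y iS by (auto simp: avg_apply avg_sites_def intro!: sum.neutral)
  qed
qed simp_all

lemma avg_sites_induct [consumes 1, case_names empty insert]:
  assumes "S \<subseteq> sites"
    and "P {}"
    and "\<And>i S. i < n \<Longrightarrow> i \<notin> S \<Longrightarrow> S \<subseteq> sites \<Longrightarrow> P S \<Longrightarrow> P (insert i S)"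
  shows "P S"
proof -
  have "finite S"
    using assms(1) finite_subset by (auto simp: qudits_def)
  then show ?thesis
    using assms by (induction S rule: finite_induct) (auto simp: qudits_def)
qed

lemma avg_sites_fixed:
  assumes "S \<subseteq> sites" and "supported X" and "\<forall>k\<in>S. avg k X = X"
  shows "avg_sites S X = X"
  using assms
  by (induction S rule: avg_sites_induct) (simp_all add: avg_sites_empty clip_supported avg_sites_insert)

lemma card_sites: "card sites = n"
  by (simp add: qudits_def)

lemma avg_sites_all: "avg_sites sites B = scale (trace B / of_nat d ^ n) Iop"
proof (rule supported_eqI)
  fix x y assume x: "x \<in> basis" and y: "y \<in> basis"
  have "merge sites z w = z" if "z \<in> basis" "w \<in> basis" for z w
    using that by (auto simp: merge_def fun_eq_iff cfgs_def)
  then have "(\<Sum>z\<in>basis. B (merge sites z x) (merge sites z y)) = trace B"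
    unfolding trace_def using x y by (intro sum.cong) simp_all
  moreover have "(\<forall>k\<in>sites. x k = y k) \<longleftrightarrow> x = y"
    using x y by (auto simp: cfgs_def fun_eq_iff)
  ultimately show "avg_sites sites B x y = scale (trace B / of_nat d ^ n) Iop x y"
    using x y d_pos by (auto simp: avg_sites_def scale_def Iop_def card_sites)
qed simp_all

lemma scalar_if_avg_fixed:
  assumes "supported X" and "\<forall>k<n. avg k X = X"
  shows "X = scale (trace X / of_nat d ^ n) Iop"
  using avg_sites_fixed[of sites X] assms avg_sites_all by (simp add: qudits_def)

lemma hs_sq_diff_avg_sites_le:
  assumes "S \<subseteq> sites" and Y: "supported Y"
  shows "hs_sq (Y - avg_sites S Y) \<le> (\<Sum>k\<in>S. hs_sq (dev k Y))"
  using assms(1)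
proof (induction S rule: avg_sites_induct)
  case empty
  then show ?case
    using Y by (simp add: avg_sites_empty clip_supported hs_sq_def)
next
  case (insert i S)
  let ?W = "avg_sites S Y"
  have "Y - avg_sites (insert i S) Y = dev i Y + avg i (Y - ?W)"
    using insert by (simp add: avg_sites_insert dev_def avg_diff)
  then have "hs_sq (Y - avg_sites (insert i S) Y) = hs_sq (dev i Y) + hs_sq (avg i (Y - ?W))"
    using insert by (simp add: hs_sq_add_orthogonal hs_inner_dev_avg)
  also have "\<dots> \<le> hs_sq (dev i Y) + hs_sq (Y - ?W)"
    using insert by (simp add: hs_sq_avg_le)
  moreover have "(\<Sum>k\<in>insert i S. hs_sq (dev k Y)) = hs_sq (dev i Y) + (\<Sum>k\<in>S. hs_sq (dev k Y))"
    using insert finite_subset[of S sites] by (simp add: qudits_def)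
  ultimately show ?case
    using insert.IH by linarith
qed

(* This is Phi; by influence_eq_infl_sum the influence of B is infl_sum B / d ^ n. *)
definition infl_sum :: "op \<Rightarrow> real" where
  "infl_sum B = (\<Sum>i<n. hs_sq (dev i B))"

lemma infl_sum_clip [simp]: "infl_sum (clip B) = infl_sum B"
  unfolding infl_sum_def dev_def by (intro sum.cong refl) (simp add: avg_clip hs_sq_diff_clip)

lemma hs_inner_diff_avg2_orthogonal:
  assumes j: "j < n" and l: "l < n"
  shows "hs_inner (Y - avg j (avg l Y)) (avg j (avg l Z)) = 0"
proof -
  have "avg l (avg j (Y - avg j (avg l Y))) = 0"
    using assms by (simp add: avg_diff avg_idem avg_commute[OF l j])
  then show ?thesis
    by (simp add: hs_inner_avg[OF j, symmetric] hs_inner_avg[OF l, symmetric])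
qed

lemma hs_sq_diff_avg2:
  assumes j: "j < n" and l: "l < n"
  shows "hs_sq (Y - avg j (avg l Y)) = hs_sq (dev j Y) + hs_sq (dev l Y) - hs_sq (dev j (dev l Y))"
proof -
  have "Y - avg j (avg l Y) = dev j Y + avg j (dev l Y)"
    by (simp add: dev_def avg_diff)
  then have "hs_sq (Y - avg j (avg l Y)) = hs_sq (dev j Y) + hs_sq (avg j (dev l Y))"
    by (simp add: hs_sq_add_orthogonal hs_inner_dev_avg[OF j])
  then show ?thesis
    using hs_sq_avg_dev[OF j, of "dev l Y"] by simp
qed

lemma infl_sum_lower_bound:
  assumes j: "j < n" and l: "l < n" and jl: "j \<noteq> l" and Y: "supported Y"
  shows "hs_sq (Y - avg_sites sites Y) + hs_sq (dev j (dev l Y)) \<le> infl_sum Y"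
proof -
  define S where "S = sites - {j, l}"
  have S: "S \<subseteq> sites" "j \<notin> insert l S" "l \<notin> S" and sites: "sites = insert j (insert l S)"
    using j l jl by (auto simp: S_def qudits_def)
  let ?W = "avg_sites S Y"
  have "avg_sites sites Y = avg j (avg l ?W)"
    using S j l by (simp add: sites avg_sites_insert)
  then have dec: "Y - avg_sites sites Y = (Y - avg j (avg l Y)) + avg j (avg l (Y - ?W))"
    by (simp add: avg_diff)
  have "hs_sq (Y - avg_sites sites Y) = hs_sq (Y - avg j (avg l Y)) + hs_sq (avg j (avg l (Y - ?W)))"
    unfolding dec by (rule hs_sq_add_orthogonal[OF hs_inner_diff_avg2_orthogonal[OF j l]])
  moreover have "hs_sq (avg j (avg l (Y - ?W))) \<le> hs_sq (Y - ?W)"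
    using hs_sq_avg_le[OF j, of "avg l (Y - ?W)"] hs_sq_avg_le[OF l, of "Y - ?W"] by linarith
  moreover have "hs_sq (Y - ?W) \<le> (\<Sum>k\<in>S. hs_sq (dev k Y))"
    by (rule hs_sq_diff_avg_sites_le[OF S(1) Y])
  moreover have "infl_sum Y = (\<Sum>k\<in>insert j (insert l S). hs_sq (dev k Y))"
    unfolding infl_sum_def sites[symmetric] by (simp add: qudits_def)
  moreover have "finite S"
    using S(1) finite_subset by (auto simp: qudits_def)
  ultimately show ?thesis
    using S hs_sq_diff_avg2[OF j l, of Y] by simp
qed

section \<open>Operators acting on a single qudit\<close>

definition local_at :: "nat \<Rightarrow> op \<Rightarrow> bool" where
  "local_at j X \<longleftrightarrow> supported X \<and> (\<forall>k<n. k \<noteq> j \<longrightarrow> avg k X = X)"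

lemma local_at_apply:
  assumes i: "i < n" and X: "local_at i X" and u: "u \<in> basis" and v: "v \<in> basis"
  shows "X u v = (if \<forall>k\<in>sites - {i}. u k = v k then X ((\<lambda>_. 0)(i := u i)) ((\<lambda>_. 0)(i := v i)) else 0)"
proof -
  let ?S = "sites - {i}"
  have fixed: "avg_sites ?S X = X"
    using X by (intro avg_sites_fixed) (auto simp: local_at_def qudits_def)
  have merge_eq: "merge ?S z w = merge ?S z ((\<lambda>_. 0)(i := w i))" if "w \<in> basis" for z w
    using that by (auto simp: merge_def fun_eq_iff cfgs_def qudits_def)
  have "(\<lambda>_. 0)(i := u i) \<in> basis" "(\<lambda>_. 0)(i := v i) \<in> basis"
    using u v i basis_less zero_in_basis basis_upd by auto
  then have "avg_sites ?S X u v = (if \<forall>k\<in>?S. u k = v k then avg_sites ?S X ((\<lambda>_. 0)(i := u i)) ((\<lambda>_. 0)(i := v i)) else 0)"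
    using u v by (simp add: avg_sites_def merge_eq[OF u] merge_eq[OF v])
  then show ?thesis
    by (simp only: fixed)
qed

lemma local_at_opmul: "j < n \<Longrightarrow> local_at j X \<Longrightarrow> local_at j Y \<Longrightarrow> local_at j (X \<star> Y)"
  by (auto simp: local_at_def avg_opmul_left)

lemma local_at_add: "local_at j X \<Longrightarrow> local_at j Y \<Longrightarrow> local_at j (X + Y)"
  by (simp add: local_at_def avg_add)

lemma local_at_diff: "local_at j X \<Longrightarrow> local_at j Y \<Longrightarrow> local_at j (X - Y)"
  by (simp add: local_at_def avg_diff)

lemma local_at_scale: "local_at j X \<Longrightarrow> local_at j (scale c X)"
  by (simp add: local_at_def avg_scale)

lemma local_at_Iop: "local_at j Iop"
  by (simp add: local_at_def avg_Iop)

lemma local_at_adj: "local_at j X \<Longrightarrow> local_at j (adj X)"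
  by (simp add: local_at_def avg_adj)

lemma opmul_commute_local:
  assumes i: "i < n" and fixed: "avg i X = X" and Y: "local_at i Y"
  shows "X \<star> Y = Y \<star> X"
proof (rule supported_eqI)
  fix x y assume x: "x \<in> basis" and y: "y \<in> basis"
  have X: "X u w = (if u i = w i then X (u(i := 0)) (w(i := 0)) else 0)" if "u \<in> basis" "w \<in> basis" for u w
    using that avg_eq_self_iff[OF i, of X] fixed by (metis supported_avg)
  note Y' = local_at_apply[OF i Y]
  let ?c = "X (x(i := 0)) (y(i := 0)) * Y ((\<lambda>_. 0)(i := x i)) ((\<lambda>_. 0)(i := y i))"
  have upd_eq: "w = v(i := a)" if "w \<in> basis" "v \<in> basis" "w i = a" "\<forall>k\<in>sites - {i}. w k = v k" for w v a
    using that by (auto simp: fun_eq_iff cfgs_def qudits_def) (metis Diff_iff lessThan_iff singletonD)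
  have "X x w * Y w y = (if w = y(i := x i) then ?c else 0)" if w: "w \<in> basis" for w
  proof (cases "w = y(i := x i)")
    case False
    then have "x i \<noteq> w i \<or> \<not> (\<forall>k\<in>sites - {i}. w k = y k)"
      using upd_eq[OF w y, of "x i"] by metis
    then show ?thesis
      using X[OF x w] Y'[OF w y] False by auto
  qed (use x y X Y' w in simp)
  moreover have "Y x w * X w y = (if w = x(i := y i) then ?c else 0)" if w: "w \<in> basis" for w
  proof (cases "w = x(i := y i)")
    case False
    then have "w i \<noteq> y i \<or> \<not> (\<forall>k\<in>sites - {i}. x k = w k)"
      using upd_eq[OF w x, of "y i"] by metis
    then show ?thesis
      using X[OF w y] Y'[OF x w] False by auto
  qed (use x y X Y' w in \<open>simp add: mult.commute\<close>)
  moreover have "y(i := x i) \<in> basis" "x(i := y i) \<in> basis"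
    using x y i basis_less basis_upd by auto
  ultimately show "(X \<star> Y) x y = (Y \<star> X) x y"
    using x y finite_basis by (simp add: opmul_def cong: sum.cong)
qed simp_all

lemma trace_adj_opmul_self: "trace (adj A \<star> A) = of_real (hs_sq A)"
  by (simp add: hs_inner_trace[symmetric] hs_inner_self)

lemma avg_local_scalar:
  assumes l: "l < n" and Y: "local_at l Y"
  shows "avg l Y = scale (trace Y / of_nat d ^ n) Iop"
proof -
  have "avg k (avg l Y) = avg l Y" if "k < n" for k
    using Y l that avg_commute[OF that l, of Y] by (cases "k = l") (auto simp: local_at_def avg_idem)
  then show ?thesis
    using scalar_if_avg_fixed[of "avg l Y"] trace_avg[OF l] by simp
qed

lemma hs_sq_opmul_local:
  assumes j: "j < n" and l: "l < n" and jl: "j \<noteq> l" and X: "local_at j X" and Y: "local_at l Y"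
  shows "hs_sq (X \<star> Y) = hs_sq X * hs_sq Y / real d ^ n"
proof -
  let ?A = "adj X \<star> X" and ?B = "Y \<star> adj Y"
  have fixed: "avg l ?A = ?A"
    using local_at_opmul[OF j local_at_adj[OF X] X] l jl by (simp add: local_at_def)
  have "complex_of_real (hs_sq (X \<star> Y)) = trace (adj Y \<star> (?A \<star> Y))"
    by (simp add: trace_adj_opmul_self[symmetric] adj_opmul opmul_assoc)
  also have "\<dots> = trace (avg l (?A \<star> ?B))"
    by (simp add: trace_avg[OF l] trace_opmul_commute[of "adj Y"] opmul_assoc)
  also have "\<dots> = trace ?B / of_nat d ^ n * trace ?A"
    by (simp add: avg_opmul_left[OF l fixed] avg_local_scalar[OF l local_at_opmul[OF l Y local_at_adj[OF Y]]]
        opmul_scale_right trace_scale opmul_Iop)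
  also have "\<dots> = of_real (hs_sq Y / real d ^ n * hs_sq X)"
    by (simp add: trace_adj_opmul_self trace_opmul_commute[of Y])
  finally show ?thesis
    by (simp only: of_real_eq_iff mult.commute times_divide_eq_right)
qed

definition site_unit :: "nat \<Rightarrow> nat \<Rightarrow> nat \<Rightarrow> op" where
  "site_unit j a b = (\<lambda>x y. if x \<in> basis \<and> y \<in> basis \<and> x j = a \<and> y j = b \<and> (\<forall>k. k \<noteq> j \<longrightarrow> x k = y k)
     then 1 else 0)"

lemma supported_site_unit [simp]: "supported (site_unit j a b)"
  by (simp add: site_unit_def supported_def)

lemma local_at_site_unit:
  assumes j: "j < n"
  shows "local_at j (site_unit j a b)"
  unfolding local_at_def
proof (intro conjI allI impI supported_site_unit)
  fix k assume k: "k < n" "k \<noteq> j"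
  show "avg k (site_unit j a b) = site_unit j a b"
    using k d_pos by (subst avg_eq_self_iff[OF k(1) supported_site_unit]) (auto simp: site_unit_def basis_upd)
qed

lemma opmul_site_unit_apply:
  assumes j: "j < n" and x: "x \<in> basis" and y: "y \<in> basis"
  shows "a < d \<Longrightarrow> (B \<star> site_unit j a b) x y = (if y j = b then B x (y(j := a)) else 0)"
    and "b < d \<Longrightarrow> (site_unit j a b \<star> B) x y = (if x j = a then B (x(j := b)) y else 0)"
proof -
  assume a: "a < d"
  have "site_unit j a b w y = (if w = y(j := a) \<and> y j = b then 1 else 0)" if "w \<in> basis" for w
    using that y by (auto simp: site_unit_def fun_eq_iff)
  then have "(B \<star> site_unit j a b) x y = (\<Sum>w\<in>basis. if w = y(j := a) then (if y j = b then B x w else 0) else 0)"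
    using x y by (auto simp: opmul_def intro!: sum.cong)
  then show "(B \<star> site_unit j a b) x y = (if y j = b then B x (y(j := a)) else 0)"
    using y a j basis_upd finite_basis by simp
next
  assume b: "b < d"
  have "site_unit j a b x w = (if w = x(j := b) \<and> x j = a then 1 else 0)" if "w \<in> basis" for w
    using that x by (auto simp: site_unit_def fun_eq_iff)
  then have "(site_unit j a b \<star> B) x y = (\<Sum>w\<in>basis. if w = x(j := b) then (if x j = a then B w y else 0) else 0)"
    using x y by (auto simp: opmul_def intro!: sum.cong)
  then show "(site_unit j a b \<star> B) x y = (if x j = a then B (x(j := b)) y else 0)"
    using x b j basis_upd finite_basis by simp
qed

lemma avg_eq_self_if_commutes_site_units:
  assumes j: "j < n" and B: "supported B"
    and commutes: "\<And>a b. a < d \<Longrightarrow> b < d \<Longrightarrow> B \<star> site_unit j a b = site_unit j a b \<star> B"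
  shows "avg j B = B"
proof (subst avg_eq_self_iff[OF j B], intro ballI)
  fix x y assume x: "x \<in> basis" and y: "y \<in> basis"
  have yj: "y j < d"
    using basis_less[OF y] .
  show "B x y = (if x j = y j then B (x(j := 0)) (y(j := 0)) else 0)"
  proof (cases "x j = y j")
    case True
    have x0: "x(j := 0) \<in> basis"
      using basis_upd j x d_pos by auto
    have "(B \<star> site_unit j 0 (y j)) (x(j := 0)) y = (site_unit j 0 (y j) \<star> B) (x(j := 0)) y"
      using commutes yj d_pos by metis
    then show ?thesis
      using True opmul_site_unit_apply[OF j x0 y, where a = 0 and b = "y j" and B = B] d_pos yj by (simp add: fun_upd_idem)
  next
    case False
    have "(B \<star> site_unit j (y j) (y j)) x y = (site_unit j (y j) (y j) \<star> B) x y"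
      using commutes yj by metis
    then show ?thesis
      using False opmul_site_unit_apply[OF j x y, where a = "y j" and b = "y j" and B = B] yj by simp
  qed
qed

(* A nonzero operator on qudit i with vanishing average; the qudit on which its image
   under Ad V acts will be site_perm i. *)
definition probe :: "nat \<Rightarrow> op" where
  "probe i = site_unit i 0 0 - scale (1 / of_nat d) Iop"

lemma supported_probe [simp]: "supported (probe i)"
  by (simp add: probe_def)

lemma local_at_probe: "i < n \<Longrightarrow> local_at i (probe i)"
  unfolding probe_def by (intro local_at_diff local_at_site_unit local_at_scale local_at_Iop)

lemma avg_site_unit_diag:
  assumes i: "i < n"
  shows "avg i (site_unit i 0 0) = scale (1 / of_nat d) Iop"
proof (rule supported_eqI)
  fix x y assume x: "x \<in> basis" and y: "y \<in> basis"
  have "(\<Sum>t<d. site_unit i 0 0 (x(i := t)) (y(i := t)))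
      = (\<Sum>t<d. if t = 0 then (if \<forall>k. k \<noteq> i \<longrightarrow> x k = y k then 1 else 0) else 0)"
    using x y i by (intro sum.cong refl) (auto simp: site_unit_def basis_upd)
  moreover have "(x i = y i \<and> (\<forall>k. k \<noteq> i \<longrightarrow> x k = y k)) \<longleftrightarrow> x = y"
    by auto
  ultimately show "avg i (site_unit i 0 0) x y = scale (1 / of_nat d) Iop x y"
    using x y d_pos by (auto simp: avg_apply scale_def Iop_def)
qed simp_all

lemma avg_probe [simp]: "i < n \<Longrightarrow> avg i (probe i) = 0"
  by (simp add: probe_def avg_diff avg_scale avg_Iop avg_site_unit_diag)

lemma probe_nonzero: "probe i \<noteq> 0"
proof
  assume "probe i = 0"
  then have "probe i (\<lambda>_. 0) (\<lambda>_. 0) = 0"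
    by simp
  moreover have "probe i (\<lambda>_. 0) (\<lambda>_. 0) = 1 - 1 / of_nat d"
    using zero_in_basis by (simp add: probe_def site_unit_def scale_def Iop_def)
  ultimately show False
    using two_le_d by simp
qed

lemma infl_sum_local:
  assumes j: "j < n" and Z: "local_at j Z"
  shows "infl_sum Z = hs_sq (dev j Z)"
proof -
  have "dev k Z = 0" if "k < n" "k \<noteq> j" for k
    using Z that dev_eq_0_iff[of Z k] by (simp add: local_at_def)
  then have "infl_sum Z = (\<Sum>k<n. if k = j then hs_sq (dev j Z) else 0)"
    unfolding infl_sum_def by (intro sum.cong) auto
  then show ?thesis
    using j by simp
qed

lemma diff_avg_sites_all_local:
  assumes j: "j < n" and Z: "local_at j Z"
  shows "Z - avg_sites sites Z = dev j Z"
proof -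
  have "avg_sites (sites - {j}) Z = Z"
    using Z by (intro avg_sites_fixed) (auto simp: local_at_def qudits_def)
  moreover have "sites = insert j (sites - {j})"
    using j by (auto simp: qudits_def)
  ultimately have "avg_sites sites Z = avg j Z"
    using avg_sites_insert[OF j, of "sites - {j}" Z] by simp
  then show ?thesis
    by (simp add: dev_def)
qed

lemma Ad_avg_sites_all: "unitary_op V \<Longrightarrow> Ad V (avg_sites sites B) = avg_sites sites (Ad V B)"
  by (simp add: avg_sites_all Ad_scale Ad_Iop trace_Ad)

lemma dev_add: "dev i (A + B) = dev i A + dev i B"
  by (simp add: dev_def avg_add)

lemma dev_dev_eq_0_if_fixed:
  assumes j: "j < n" and l: "l < n"
  shows "avg l Z = Z \<Longrightarrow> dev j (dev l Z) = 0"
    and "avg j Z = Z \<Longrightarrow> dev j (dev l Z) = 0"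
  using avg_commute[OF j l] by (simp_all add: dev_def avg_diff)

lemma local_at_dev_if_dev_dev_vanish:
  assumes j: "j < n" and Y: "supported Y"
    and vanish: "\<And>k. k < n \<Longrightarrow> k \<noteq> j \<Longrightarrow> dev k (dev j Y) = 0"
  shows "local_at j (dev j Y)"
  using vanish Y dev_eq_0_iff by (simp add: local_at_def)

lemma decompose_if_dev_dev_vanish:
  "dev j (dev l Y) = 0 \<Longrightarrow> Y = dev j Y + dev l Y + avg j (avg l Y)"
  by (simp add: dev_def avg_diff algebra_simps)

lemma dev_dev_opmul_local:
  assumes j: "j < n" and l: "l < n" and jl: "j \<noteq> l"
    and A: "local_at j A" "avg j A = 0" and C: "local_at l C" "avg l C = 0"
  shows "dev j (dev l (A \<star> C)) = A \<star> C" and "dev j (dev l (C \<star> A)) = C \<star> A"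
proof -
  have Al: "avg l A = A" and Cj: "avg j C = C"
    using A(1) C(1) j l jl by (simp_all add: local_at_def)
  have "avg l (A \<star> C) = 0" "avg j (A \<star> C) = 0"
    using C(2) A(2) avg_opmul_left[OF l Al] avg_opmul_right[OF j Cj] by simp_all
  then show "dev j (dev l (A \<star> C)) = A \<star> C"
    by (simp add: dev_def avg_diff)
  have "avg l (C \<star> A) = 0" "avg j (C \<star> A) = 0"
    using C(2) A(2) avg_opmul_right[OF l Al] avg_opmul_left[OF j Cj] by simp_all
  then show "dev j (dev l (C \<star> A)) = C \<star> A"
    by (simp add: dev_def avg_diff)
qed

lemma dev_zero_if_dev_dev_vanish:
  assumes j: "j < n" and l: "l < n" and jl: "j \<noteq> l" and Y: "supported Y"
    and vanish: "\<And>a b. a < n \<Longrightarrow> b < n \<Longrightarrow> a \<noteq> b \<Longrightarrow> dev a (dev b Y) = 0"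
    and vanish_sq: "dev j (dev l (Y \<star> Y)) = 0"
  shows "dev j Y = 0 \<or> dev l Y = 0"
proof -
  (* Y = A + C + B with A, C acting on qudits j, l alone and B fixed by avg j and avg l;
     the (j, l)-part of Y \<star> Y is then A \<star> C + C \<star> A = 2 (A \<star> C). *)
  define A where "A = dev j Y"
  define C where "C = dev l Y"
  define B where "B = avg j (avg l Y)"
  have A: "local_at j A" "avg j A = 0" and C: "local_at l C" "avg l C = 0"
    using local_at_dev_if_dev_dev_vanish[OF j Y] local_at_dev_if_dev_dev_vanish[OF l Y] vanish j l
    by (auto simp: A_def C_def)
  have Al: "avg l A = A" and Cj: "avg j C = C"
    using A(1) C(1) j l jl by (simp_all add: local_at_def)
  have Bj: "avg j B = B" and Bl: "avg l B = B"
    by (simp_all add: B_def avg_idem j l avg_commute[OF l j])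
  define Rl where "Rl = A \<star> A + A \<star> B + B \<star> A + B \<star> B"
  define Rj where "Rj = B \<star> C + C \<star> B + C \<star> C"
  have "Y = A + C + B"
    unfolding A_def B_def C_def by (rule decompose_if_dev_dev_vanish[OF vanish[OF j l jl]])
  then have "Y \<star> Y = (A \<star> C + C \<star> A) + Rl + Rj"
    by (simp add: Rl_def Rj_def opmul_add_left opmul_add_right algebra_simps)
  moreover have "dev j (dev l Rl) = 0"
    using Al Bl l unfolding Rl_def by (intro dev_dev_eq_0_if_fixed(1)[OF j l]) (simp add: avg_add avg_opmul_left)
  moreover have "dev j (dev l Rj) = 0"
    using Cj Bj j unfolding Rj_def by (intro dev_dev_eq_0_if_fixed(2)[OF j l]) (simp add: avg_add avg_opmul_left)
  ultimately have "A \<star> C + C \<star> A = 0"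
    using vanish_sq dev_dev_opmul_local[OF j l jl A C] by (simp add: dev_add)
  moreover have "A \<star> C = C \<star> A"
    by (rule opmul_commute_local[OF l Al C(1)])
  ultimately have "A \<star> C = 0"
    by (simp add: fun_eq_iff)
  then have "hs_sq A * hs_sq C = 0"
    using hs_sq_opmul_local[OF j l jl A(1) C(1)] d_pos by simp
  then show ?thesis
    using Y hs_sq_eq_0_iff by (auto simp: A_def C_def)
qed

lemma infl_sum_le_local:
  assumes "j < n" and "local_at j Z"
  shows "infl_sum Z \<le> hs_sq Z"
  using assms by (simp add: infl_sum_local hs_sq_dev_le)

lemma probe_product:
  assumes i: "i < n" and i': "i' < n" and ii': "i \<noteq> i'"
  shows "0 < hs_sq (probe i \<star> probe i')" and "2 * hs_sq (probe i \<star> probe i') \<le> infl_sum (probe i \<star> probe i')"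
proof -
  let ?P = "probe i \<star> probe i'"
  show "0 < hs_sq ?P"
    using hs_sq_opmul_local[OF i i' ii' local_at_probe[OF i] local_at_probe[OF i']]
      hs_sq_pos[OF supported_probe probe_nonzero] d_pos by simp
  have "avg i (probe i') = probe i'" "avg i' (probe i) = probe i"
    using local_at_probe[OF i] local_at_probe[OF i'] i i' ii' by (simp_all add: local_at_def)
  then have "dev i ?P = ?P" "dev i' ?P = ?P"
    using i i' by (simp_all add: dev_def avg_opmul_right avg_opmul_left)
  then have "hs_sq ?P + hs_sq ?P = (\<Sum>k\<in>{i, i'}. hs_sq (dev k ?P))"
    using ii' by simp
  also have "\<dots> \<le> infl_sum ?P"
    unfolding infl_sum_def using i i' hs_sq_nonneg by (intro sum_mono2) auto
  finally show "2 * hs_sq ?P \<le> infl_sum ?P"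
    by simp
qed

section \<open>Influence and the Pauli expansion\<close>

lemma pauli_completeness:
  assumes z: "z \<in> basis" and x: "x \<in> basis" and z': "z' \<in> basis" and x': "x' \<in> basis"
  shows "(\<Sum>a\<in>pstrings d n. pauli d n a z x * cnj (pauli d n a z' x'))
       = (if z = z' \<and> x = x' then of_nat d ^ n else 0)"
proof -
  have "(\<Sum>a\<in>pstrings d n. pauli d n a z x * cnj (pauli d n a z' x'))
      = (\<Prod>i<n. \<Sum>s<d. \<Sum>t<d. pauli1 d (s, t) (z i) (x i) * cnj (pauli1 d (s, t) (z' i) (x' i)))"
    unfolding pauli_def cnj_prod prod.distrib[symmetric] by (rule sum_pstrings_prod)
  also have "\<dots> = (\<Prod>i<n. if z i = z' i \<and> x i = x' i then of_nat d else 0)"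
    using z x z' x' by (intro prod.cong refl) (simp add: pauli1_orthogonality[OF d_pos] basis_less)
  also have "\<dots> = (if \<forall>i<n. z i = z' i \<and> x i = x' i then of_nat d ^ n else 0)"
    by (rule prod_if_const)
  also have "(\<forall>i<n. z i = z' i \<and> x i = x' i) \<longleftrightarrow> z = z' \<and> x = x'"
    using z x z' x' by (auto simp: fun_eq_iff) (metis basis_outside not_less)+
  finally show ?thesis .
qed

definition pauli_coeff :: "op \<Rightarrow> pstring \<Rightarrow> complex" where
  "pauli_coeff B a = trace (B \<star> clip (pauli d n a))"

lemma parseval: "(\<Sum>a\<in>pstrings d n. (cmod (pauli_coeff B a))\<^sup>2) = real d ^ n * hs_sq B"
proof -
  have "pauli_coeff B a = (\<Sum>q\<in>basis \<times> basis. B (fst q) (snd q) * pauli d n a (snd q) (fst q))" for a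
    by (simp add: pauli_coeff_def trace_def opmul_def clip_def sum.cartesian_product split_def)
  moreover have "(\<Sum>a\<in>pstrings d n. pauli d n a (snd q) (fst q) * cnj (pauli d n a (snd q') (fst q')))
      = (if q = q' then of_real (real d ^ n) else 0)" if "q \<in> basis \<times> basis" "q' \<in> basis \<times> basis" for q q'
    using that by (auto simp: pauli_completeness prod_eq_iff mem_Times_iff)
  ultimately show ?thesis
    using finite_basis by (simp add: parseval_from_completeness hs_sq_def sum.cartesian_product split_def)
qed

lemma pauli_split:
  "i < n \<Longrightarrow> pauli d n a x y = pauli1 d (a i) (x i) (y i) * (\<Prod>k\<in>{..<n} - {i}. pauli1 d (a k) (x k) (y k))"
  by (simp add: pauli_def prod.remove)

lemma pauli_split_upd:
  "(\<Prod>k\<in>{..<n} - {i}. pauli1 d (a k) ((x(i := u)) k) ((y(i := v)) k)) = (\<Prod>k\<in>{..<n} - {i}. pauli1 d (a k) (x k) (y k))"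
  by (intro prod.cong refl) auto

lemma sum_pauli1_diag:
  assumes p: "fst p < d" "snd p < d" and nz: "p \<noteq> (0, 0)"
  shows "(\<Sum>u<d. pauli1 d p u u) = 0"
proof (cases "fst p = 0")
  case False
  have "(u + 0) mod d \<noteq> (u + fst p) mod d" if "u < d" for u
    using add_mod_eq_iff[of 0 d "(u + fst p) mod d" u] add_mod_eq_iff[of "fst p" d "(u + fst p) mod d" u] p False that
    by auto
  then show ?thesis
    by (simp add: pauli1_def)
next
  case True
  then have "snd p \<noteq> 0"
    using nz by (cases p) auto
  moreover have "(\<Sum>u<d. pauli1 d p u u) = (\<Sum>u<d. cis (2 * pi * real (u * snd p) / real d) * cnj (cis (2 * pi * real (u * 0) / real d)))"
    using True by (intro sum.cong refl) (simp add: pauli1_def mult.commute)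
  ultimately show ?thesis
    using sum_roots_of_unity[OF d_pos p(2) d_pos] by simp
qed

lemma avg_clip_pauli:
  assumes a: "a \<in> pstrings d n" and i: "i < n"
  shows "avg i (clip (pauli d n a)) = (if a i = (0, 0) then clip (pauli d n a) else 0)"
proof (cases "a i = (0, 0)")
  case True
  have fixed: "clip (pauli d n a) x y = (if x i = y i then clip (pauli d n a) (x(i := 0)) (y(i := 0)) else 0)"
    if "x \<in> basis" "y \<in> basis" for x y
    using that True basis_less[OF that(2)] basis_upd[OF _ i d_pos] pauli_split_upd[of a x i 0 y 0]
    by (simp add: clip_def pauli_split[OF i] pauli1_def)
  have "avg i (clip (pauli d n a)) = clip (pauli d n a)"
    unfolding avg_eq_self_iff[OF i supported_clip] using fixed by blast
  then show ?thesis
    using True by simp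
next
  case False
  have p: "fst (a i) < d" "snd (a i) < d"
    using a i by (auto simp: pstrings_def)
  have "avg i (clip (pauli d n a)) x y = 0" if "x \<in> basis" "y \<in> basis" for x y
  proof -
    have "(\<Sum>t<d. clip (pauli d n a) (x(i := t)) (y(i := t)))
        = (\<Sum>t<d. pauli1 d (a i) t t) * (\<Prod>k\<in>{..<n} - {i}. pauli1 d (a k) (x k) (y k))"
      using that i by (simp add: sum_distrib_right clip_def basis_upd pauli_split[OF i] pauli_split_upd)
    then show ?thesis
      using that sum_pauli1_diag[OF p False] by (simp add: avg_apply)
  qed
  then have "avg i (clip (pauli d n a)) = 0"
    by (intro supported_eqI) simp_all
  then show ?thesis
    using False by simp
qed

lemma pauli_coeff_avg:
  assumes a: "a \<in> pstrings d n" and i: "i < n"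
  shows "pauli_coeff (avg i B) a = (if a i = (0, 0) then pauli_coeff B a else 0)"
proof -
  let ?P = "clip (pauli d n a)"
  have "pauli_coeff (avg i B) a = trace (avg i (avg i B \<star> ?P))"
    by (simp only: pauli_coeff_def trace_avg[OF i])
  also have "\<dots> = trace (avg i B \<star> avg i ?P)"
    by (simp only: avg_opmul_left[OF i avg_idem[OF i]])
  finally have coeff: "pauli_coeff (avg i B) a = trace (avg i B \<star> avg i ?P)" .
  show ?thesis
  proof (cases "a i = (0, 0)")
    case True
    then have fixed: "avg i ?P = ?P"
      using avg_clip_pauli[OF a i] by simp
    have "trace (avg i B \<star> ?P) = trace (avg i (B \<star> ?P))"
      by (simp only: avg_opmul_right[OF i fixed])
    then show ?thesis
      using True coeff fixed by (simp add: pauli_coeff_def trace_avg[OF i])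
  next
    case False
    then show ?thesis
      using coeff avg_clip_pauli[OF a i] by (simp add: trace_def)
  qed
qed

lemma sum_pauli_coeff_site:
  assumes i: "i < n" and B: "supported B"
  shows "(\<Sum>a\<in>pstrings d n. if a i \<noteq> (0, 0) then (cmod (pauli_coeff B a))\<^sup>2 else 0) = real d ^ n * hs_sq (dev i B)"
proof -
  have "(\<Sum>a\<in>pstrings d n. if a i \<noteq> (0, 0) then (cmod (pauli_coeff B a))\<^sup>2 else 0)
      = (\<Sum>a\<in>pstrings d n. (cmod (pauli_coeff B a))\<^sup>2 - (cmod (pauli_coeff (avg i B) a))\<^sup>2)"
    by (intro sum.cong refl) (simp add: pauli_coeff_avg[OF _ i])
  also have "\<dots> = real d ^ n * (hs_sq B - hs_sq (avg i B))"
    by (simp add: sum_subtractf parseval right_diff_distrib)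
  finally show ?thesis
    using hs_sq_avg_dev[OF i, of B] by simp
qed

lemma trace_pauli: "tr d sites (mmul d sites B (pauli d n a)) = pauli_coeff (clip B) a"
  by (simp add: tr_def mmul_def pauli_coeff_def trace_def opmul_def clip_def)

lemma pweight_eq_sum: "real (pweight n a) = (\<Sum>i<n. if a i \<noteq> (0, 0) then 1 else 0)"
proof -
  have "{i. i < n \<and> a i \<noteq> (0, 0)} = {..<n} \<inter> {i. a i \<noteq> (0, 0)}"
    by auto
  then show ?thesis
    by (simp add: pweight_def sum.If_cases)
qed

lemma influence_eq_infl_sum: "influence d n B = infl_sum B / real d ^ n"
proof -
  let ?c = "\<lambda>a. (cmod (pauli_coeff (clip B) a))\<^sup>2"
  have "influence d n B = (\<Sum>a\<in>pstrings d n. \<Sum>i<n. (if a i \<noteq> (0, 0) then ?c a else 0) / real d ^ (2 * n))"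
    unfolding influence_def pweightdist_def pweight_eq_sum trace_pauli
    by (simp add: sum_distrib_right sum_divide_distrib if_distrib[of "\<lambda>u. u * _"] cong: if_cong)
  also have "\<dots> = (\<Sum>i<n. \<Sum>a\<in>pstrings d n. if a i \<noteq> (0, 0) then ?c a else 0) / real d ^ (2 * n)"
    by (subst sum.swap) (simp add: sum_divide_distrib)
  also have "\<dots> = (\<Sum>i<n. real d ^ n * hs_sq (dev i (clip B))) / real d ^ (2 * n)"
    by (intro arg_cong[where f = "\<lambda>x. x / _"] sum.cong refl) (simp add: sum_pauli_coeff_site)
  also have "\<dots> = infl_sum (clip B) / real d ^ n"
    using d_pos by (simp only: infl_sum_def sum_distrib_left[symmetric] mult_2 power_add) simp
  also have "\<dots> = infl_sum B / real d ^ n"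
    by simp
  finally show ?thesis .
qed

lemma norm2_eq_hs_sq: "norm2 d n B = sqrt (hs_sq B / real d ^ n)"
proof -
  have "tr d sites (mmul d sites (adj B) B) = (\<Sum>x\<in>basis. \<Sum>z\<in>basis. cnj (B z x) * B z x)"
    by (simp add: tr_def mmul_def adj_def)
  also have "\<dots> = (\<Sum>z\<in>basis. \<Sum>x\<in>basis. cnj (B z x) * B z x)"
    by (rule sum.swap)
  also have "\<dots> = of_real (hs_sq B)"
    by (simp add: hs_sq_def cnj_mult_self)
  finally show ?thesis
    by (simp add: norm2_def)
qed

lemma clip_conj_by: "clip (conj_by d n U B) = Ad (clip U) (clip B)"
  by (auto simp: clip_def conj_by_def Ad_def opmul_def mmul_def adj_def fun_eq_iff intro!: sum.cong)

lemma unitary_op_clip: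
  assumes "unitary d n U"
  shows "unitary_op (clip U)"
  unfolding unitary_op_def
proof (intro conjI supported_clip)
  show "clip U \<star> adj (clip U) = Iop" "adj (clip U) \<star> clip U = Iop"
    by (rule supported_eqI[OF supported_opmul supported_Iop];
        use assms in \<open>simp add: unitary_def opmul_def mmul_def adj_def clip_def Iop_def idop_def\<close>)+
qed

lemma infl_sum_nonneg: "0 \<le> infl_sum X"
  unfolding infl_sum_def by (intro sum_nonneg) (simp add: hs_sq_nonneg)

lemma infl_sum_le: "infl_sum X \<le> real n * hs_sq X"
proof -
  have "infl_sum X \<le> (\<Sum>i<n. hs_sq X)"
    unfolding infl_sum_def by (intro sum_mono) (simp add: hs_sq_dev_le)
  then show ?thesis
    by simp
qed

lemma infl_sum_scale: "infl_sum (scale c X) = (cmod c)\<^sup>2 * infl_sum X"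
proof -
  have "dev i (scale c X) = scale c (dev i X)" for i
    by (simp add: dev_def avg_scale) (simp add: scale_def fun_eq_iff right_diff_distrib)
  then show ?thesis
    by (simp add: infl_sum_def hs_sq_scale sum_distrib_left)
qed

lemma norm2_eq_1_iff: "norm2 d n B = 1 \<longleftrightarrow> hs_sq B = real d ^ n"
  using d_pos by (auto simp: norm2_eq_hs_sq)

lemma influence_conj_by:
  "influence d n (conj_by d n U B) = infl_sum (Ad (clip U) B) / real d ^ n"
  by (metis influence_eq_infl_sum infl_sum_clip clip_conj_by Ad_clip)

lemma influence_change_bounded:
  assumes U: "unitary d n U" and B: "norm2 d n B = 1"
  shows "\<bar>influence d n (conj_by d n U B) - influence d n B\<bar> \<le> 2 * real n"
proof -
  let ?V = "clip U"
  have hs: "hs_sq B = real d ^ n" "hs_sq (Ad ?V B) = real d ^ n"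
    using B hs_sq_Ad[OF unitary_op_clip[OF U]] by (simp_all add: norm2_eq_1_iff)
  have "infl_sum (Ad ?V B) / real d ^ n \<le> real n" "infl_sum B / real d ^ n \<le> real n"
    using infl_sum_le[of "Ad ?V B"] infl_sum_le[of B] hs d_pos by (simp_all add: divide_le_eq)
  moreover have "0 \<le> infl_sum (Ad ?V B) / real d ^ n" "0 \<le> infl_sum B / real d ^ n"
    by (simp_all add: infl_sum_nonneg)
  ultimately show ?thesis
    unfolding influence_conj_by unfolding influence_eq_infl_sum by (simp add: abs_le_iff)
qed

lemma infl_sum_Ad_if_CiS_zero:
  assumes U: "unitary d n U" and CiS: "CiS d n U = 0"
  shows "infl_sum (Ad (clip U) B) = infl_sum B"
proof -
  let ?V = "clip U" and ?f = "\<lambda>B. \<bar>influence d n (conj_by d n U B) - influence d n B\<bar>"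
  have unit: "infl_sum (Ad ?V B1) = infl_sum B1" if B1: "norm2 d n B1 = 1" for B1
  proof -
    (* CiS is a SUP of reals; it bounds each term only because the family is bounded. *)
    have "bdd_above (?f ` {B. norm2 d n B = 1})"
      using influence_change_bounded[OF U] by (intro bdd_aboveI2) auto
    then have "?f B1 \<le> CiS d n U"
      unfolding CiS_def using B1 by (intro cSUP_upper) auto
    then show ?thesis
      using CiS d_pos unfolding influence_conj_by unfolding influence_eq_infl_sum by simp
  qed
  show ?thesis
  proof (cases "clip B = 0")
    case True
    then show ?thesis
      by (metis Ad_clip Ad_zero infl_sum_clip)
  next
    case False
    define c where "c = sqrt (real d ^ n / hs_sq B)"
    have c: "0 < c" "c\<^sup>2 * hs_sq B = real d ^ n"
      using hs_sq_pos[OF supported_clip False] d_pos by (simp_all add: c_def)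
    have "norm2 d n (scale (of_real c) B) = 1"
      using c by (simp add: norm2_eq_1_iff hs_sq_scale)
    then have "infl_sum (Ad ?V (scale (of_real c) B)) = infl_sum (scale (of_real c) B)"
      by (rule unit)
    then have "c\<^sup>2 * infl_sum (Ad ?V B) = c\<^sup>2 * infl_sum B"
      by (simp add: Ad_scale infl_sum_scale)
    then show ?thesis
      using c by simp
  qed
qed

section \<open>Purities of reduced states\<close>

lemma reduced_merge: "reduced d n A \<sigma> (merge A a u) (merge A b v) = reduced d n A \<sigma> a b"
  by (simp add: reduced_def merge_def cong: if_cong)

lemma avg_sites_complement_apply:
  assumes A: "A \<subseteq> sites" and x: "x \<in> basis" and y: "y \<in> basis"
  shows "avg_sites (sites - A) \<sigma> x y
       = (if \<forall>k\<in>sites - A. x k = y k then reduced d n A \<sigma> x y / of_nat d ^ card (sites - A) else 0)"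
proof -
  have "merge (sites - A) z w = merge A w z" if "z \<in> cfgs d (sites - A)" "w \<in> basis" for z w
    using that A by (auto simp: merge_def fun_eq_iff cfgs_def)
  then show ?thesis
    using x y by (simp add: avg_sites_def reduced_def cong: sum.cong)
qed

lemma tr_reduced_sq:
  assumes A: "A \<subseteq> sites"
  shows "tr d A (mmul d A (reduced d n A \<sigma>) (reduced d n A \<sigma>))
       = of_nat d ^ card (sites - A) * trace (avg_sites (sites - A) \<sigma> \<star> avg_sites (sites - A) \<sigma>)"
proof -
  let ?S = "sites - A" and ?r = "reduced d n A \<sigma>" and ?W = "avg_sites (sites - A) \<sigma>"
  let ?D = "of_nat d ^ card ?S :: complex"
  have fin: "finite (cfgs d ?S)" and card: "card (cfgs d ?S) = d ^ card ?S"
    by (simp_all add: finite_cfgs card_cfgs qudits_def)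
  have split: "sum f basis = (\<Sum>a\<in>cfgs d A. \<Sum>u\<in>cfgs d ?S. f (merge A a u))" for f
    using sum_cfgs_merge[of A ?S] A by (simp add: Un_absorb1)
  have merge_in: "merge A a u \<in> basis" if "a \<in> cfgs d A" "u \<in> cfgs d ?S" for a u
    using that A by (auto simp: merge_def cfgs_def)
  have agree: "(\<forall>k\<in>?S. merge A a u k = merge A b v k) \<longleftrightarrow> u = v"
    if "u \<in> cfgs d ?S" "v \<in> cfgs d ?S" for a b u v
    using that by (auto simp: merge_def cfgs_def fun_eq_iff) (metis Diff_iff)+
  have "trace (?W \<star> ?W) = (\<Sum>x\<in>basis. \<Sum>y\<in>basis. ?W x y * ?W y x)"
    by (simp add: trace_def opmul_def)
  also have "\<dots> = (\<Sum>a\<in>cfgs d A. \<Sum>u\<in>cfgs d ?S. \<Sum>b\<in>cfgs d A. \<Sum>v\<in>cfgs d ?S.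
      if u = v then ?r a b * ?r b a / (?D * ?D) else 0)"
    unfolding split
  proof (intro sum.cong refl)
    fix a u b v assume "a \<in> cfgs d A" "u \<in> cfgs d ?S" "b \<in> cfgs d A" "v \<in> cfgs d ?S"
    then show "?W (merge A a u) (merge A b v) * ?W (merge A b v) (merge A a u)
        = (if u = v then ?r a b * ?r b a / (?D * ?D) else 0)"
      using agree[of u v a b] agree[of v u b a]
      by (simp add: merge_in avg_sites_complement_apply[OF A] reduced_merge)
  qed
  also have "\<dots> = (\<Sum>a\<in>cfgs d A. \<Sum>b\<in>cfgs d A. ?r a b * ?r b a) / ?D"
  proof -
    have "?D * (z / (?D * ?D)) = z / ?D" for z
      using d_pos by (simp add: field_simps)
    then show ?thesis
      using fin by (simp add: sum.swap[of _ "cfgs d ?S"] card sum_distrib_left sum_divide_distrib)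
  qed
  finally show ?thesis
    using d_pos by (simp add: tr_def mmul_def)
qed

lemma avg_sites_clip:
  assumes "S \<subseteq> sites"
  shows "avg_sites S (clip \<sigma>) = avg_sites S \<sigma>"
proof -
  have "merge S z x \<in> basis" if "z \<in> cfgs d S" "x \<in> basis" for z x
    using that assms by (auto simp: merge_def cfgs_def)
  then show ?thesis
    by (auto simp: avg_sites_def clip_def fun_eq_iff intro!: sum.cong)
qed

lemma renyi2_reduced:
  assumes "A \<subseteq> sites"
  shows "renyi2 d A (reduced d n A \<sigma>)
       = - ln (Re (of_nat d ^ card (sites - A) * trace (avg_sites (sites - A) \<sigma> \<star> avg_sites (sites - A) \<sigma>)))"
  using assms by (simp add: renyi2_def tr_reduced_sq)

lemma avg_renyi2_clip: "avg_renyi2 d n (clip \<sigma>) = avg_renyi2 d n \<sigma>"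
  unfolding avg_renyi2_def by (intro arg_cong[where f = "\<lambda>x. x / _"] sum.cong) (auto simp: renyi2_reduced avg_sites_clip)

end

section \<open>Influence-preserving unitaries permute the qudits\<close>

locale infl_preserving = qudit_register +
  fixes V :: op
  assumes unitary: "unitary_op V"
    and infl_sum_Ad: "\<And>B. infl_sum (Ad V B) = infl_sum B"
begin

lemma dev_dev_Ad_local:
  assumes i: "i < n" and X: "local_at i X" and a: "a < n" and b: "b < n" and ab: "a \<noteq> b"
  shows "dev a (dev b (Ad V X)) = 0"
proof -
  (* Both sides of this identity are invariant under Ad V, so infl_sum_lower_bound leaves
     no room for a mixed deviation of Ad V X. *)
  have "infl_sum (Ad V X) = hs_sq (X - avg_sites sites X)"
    by (simp only: infl_sum_Ad infl_sum_local[OF i X] diff_avg_sites_all_local[OF i X])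
  also have "\<dots> = hs_sq (Ad V X - avg_sites sites (Ad V X))"
    by (simp only: Ad_avg_sites_all[OF unitary, symmetric] Ad_diff[symmetric] hs_sq_Ad[OF unitary])
  finally have "hs_sq (dev a (dev b (Ad V X))) \<le> 0"
    using infl_sum_lower_bound[OF a b ab supported_Ad, of V X] by simp
  then show ?thesis
    using hs_sq_nonneg hs_sq_eq_0_iff by (metis order_antisym supported_Ad supported_dev)
qed

lemma Ad_local_single_site:
  assumes i: "i < n" and X: "local_at i X" and j: "j < n" and l: "l < n" and jl: "j \<noteq> l"
  shows "dev j (Ad V X) = 0 \<or> dev l (Ad V X) = 0"
proof (rule dev_zero_if_dev_dev_vanish[OF j l jl supported_Ad])
  show "dev a (dev b (Ad V X)) = 0" if "a < n" "b < n" "a \<noteq> b" for a b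
    using dev_dev_Ad_local[OF i X that] .
  show "dev j (dev l (Ad V X \<star> Ad V X)) = 0"
    using dev_dev_Ad_local[OF i local_at_opmul[OF i X X] j l jl] by (simp add: Ad_opmul[OF unitary])
qed

lemma exists_site_Ad_probe:
  assumes i: "i < n"
  shows "\<exists>j<n. dev j (Ad V (probe i)) \<noteq> 0"
proof (rule ccontr)
  assume "\<not> ?thesis"
  then have "\<forall>k<n. avg k (Ad V (probe i)) = Ad V (probe i)"
    using dev_eq_0_iff[of "Ad V (probe i)"] by simp
  then have "Ad V (probe i) = scale (trace (Ad V (probe i)) / of_nat d ^ n) Iop"
    by (rule scalar_if_avg_fixed[OF supported_Ad])
  then have "probe i = scale (trace (Ad V (probe i)) / of_nat d ^ n) Iop"
    using Ad_adj_Ad[OF unitary, of "probe i"] unitary_op_adj[OF unitary]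
    by (metis Ad_Iop Ad_scale clip_supported supported_probe)
  then have "avg i (probe i) = probe i"
    using i by (metis avg_scale avg_Iop)
  then show False
    using i probe_nonzero by simp
qed

definition site_perm :: "nat \<Rightarrow> nat" where
  "site_perm i = (SOME j. j < n \<and> dev j (Ad V (probe i)) \<noteq> 0)"

lemma site_perm:
  assumes "i < n"
  shows "site_perm i < n" and "dev (site_perm i) (Ad V (probe i)) \<noteq> 0"
  using someI_ex[OF exists_site_Ad_probe[OF assms]] by (simp_all add: site_perm_def)

lemma local_at_Ad:
  assumes i: "i < n" and X: "local_at i X"
  shows "local_at (site_perm i) (Ad V X)"
  unfolding local_at_def
proof (intro conjI allI impI supported_Ad)
  fix k assume k: "k < n" "k \<noteq> site_perm i"
  (* Otherwise Ad V (X + probe i) would deviate both at k and at site_perm i. *)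
  note single = Ad_local_single_site[OF i _ k(1) site_perm(1)[OF i] k(2)]
  have "dev k (Ad V X) = 0"
  proof (rule ccontr)
    assume nz: "dev k (Ad V X) \<noteq> 0"
    have "dev k (Ad V (X + probe i)) \<noteq> 0"
      using nz single[OF local_at_probe[OF i]] site_perm(2)[OF i] by (simp add: Ad_add dev_add)
    moreover have "dev (site_perm i) (Ad V (X + probe i)) \<noteq> 0"
      using nz single[OF X] site_perm(2)[OF i] by (simp add: Ad_add dev_add)
    ultimately show False
      using single[OF local_at_add[OF X local_at_probe[OF i]]] by simp
  qed
  then show "avg k (Ad V X) = Ad V X"
    using dev_eq_0_iff[of "Ad V X" k] by simp
qed

lemma inj_on_site_perm: "inj_on site_perm {..<n}"
proof (rule inj_onI, rule ccontr)
  fix i i' assume "i \<in> {..<n}" "i' \<in> {..<n}" and eq: "site_perm i = site_perm i'" and ii': "i \<noteq> i'"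
  then have i: "i < n" and i': "i' < n"
    by auto
  let ?P = "probe i \<star> probe i'"
  have "local_at (site_perm i) (Ad V ?P)"
    using local_at_opmul[OF site_perm(1)[OF i] local_at_Ad[OF i local_at_probe[OF i]]
        local_at_Ad[OF i' local_at_probe[OF i'], folded eq]]
    by (simp add: Ad_opmul[OF unitary])
  then have "infl_sum (Ad V ?P) \<le> hs_sq (Ad V ?P)"
    by (rule infl_sum_le_local[OF site_perm(1)[OF i]])
  then have "infl_sum ?P \<le> hs_sq ?P"
    by (simp add: infl_sum_Ad hs_sq_Ad[OF unitary])
  then show False
    using probe_product[OF i i' ii'] by simp
qed

lemma bij_betw_site_perm: "bij_betw site_perm sites sites"
proof -
  have "site_perm ` {..<n} = {..<n}"
    using inj_on_site_perm site_perm(1) by (intro endo_inj_surj) auto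
  then show ?thesis
    using inj_on_site_perm by (simp add: bij_betw_def qudits_def)
qed

lemma infl_preserving_adj: "infl_preserving d n (adj V)"
proof
  show "unitary_op (adj V)"
    by (rule unitary_op_adj[OF unitary])
  fix B
  have "infl_sum (Ad (adj V) B) = infl_sum (Ad V (Ad (adj V) B))"
    by (simp add: infl_sum_Ad)
  also have "\<dots> = infl_sum B"
    by (simp add: Ad_Ad_adj[OF unitary])
  finally show "infl_sum (Ad (adj V) B) = infl_sum B" .
qed

lemma site_perm_adj_site_perm:
  assumes i: "i < n"
  shows "infl_preserving.site_perm d n (adj V) (site_perm i) = i"
proof (rule ccontr)
  interpret W: infl_preserving d n "adj V"
    by (rule infl_preserving_adj)
  assume "W.site_perm (site_perm i) \<noteq> i"
  moreover have "local_at (W.site_perm (site_perm i)) (Ad (adj V) (Ad V (probe i)))"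
    by (rule W.local_at_Ad[OF site_perm(1)[OF i] local_at_Ad[OF i local_at_probe[OF i]]])
  ultimately have "avg i (Ad (adj V) (Ad V (probe i))) = Ad (adj V) (Ad V (probe i))"
    using i by (simp add: local_at_def)
  then have "probe i = 0"
    using i by (simp add: Ad_adj_Ad[OF unitary] clip_supported)
  then show False
    using probe_nonzero by simp
qed

lemma avg_Ad_fixed:
  assumes i: "i < n" and fixed: "avg i B = B"
  shows "avg (site_perm i) (Ad V B) = Ad V B"
proof -
  interpret W: infl_preserving d n "adj V"
    by (rule infl_preserving_adj)
  have j: "site_perm i < n"
    by (rule site_perm(1)[OF i])
  show ?thesis
  proof (rule avg_eq_self_if_commutes_site_units[OF j supported_Ad])
    fix a b assume "a < d" "b < d"
    let ?Q = "Ad (adj V) (site_unit (site_perm i) a b)"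
    have "local_at i ?Q"
      using W.local_at_Ad[OF j local_at_site_unit[OF j]] site_perm_adj_site_perm[OF i] by simp
    then have "B \<star> ?Q = ?Q \<star> B"
      by (rule opmul_commute_local[OF i fixed])
    then have "Ad V (B \<star> ?Q) = Ad V (?Q \<star> B)"
      by simp
    then show "Ad V B \<star> site_unit (site_perm i) a b = site_unit (site_perm i) a b \<star> Ad V B"
      by (simp add: Ad_opmul[OF unitary] Ad_Ad_adj[OF unitary] clip_supported)
  qed
qed

lemma avg_Ad:
  assumes i: "i < n"
  shows "avg (site_perm i) (Ad V B) = Ad V (avg i B)"
proof -
  interpret W: infl_preserving d n "adj V"
    by (rule infl_preserving_adj)
  have j: "site_perm i < n"
    by (rule site_perm(1)[OF i])
  (* The image ?Z of the deviation dev i B is orthogonal to everything fixed by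
     avg (site_perm i), in particular to its own average. *)
  let ?Z = "Ad V (dev i (clip B))"
  have "avg (site_perm i) ?Z = Ad V (Ad (adj V) (avg (site_perm i) ?Z))"
    using Ad_Ad_adj[OF unitary] by (simp add: clip_supported)
  moreover have "avg i (Ad (adj V) (avg (site_perm i) ?Z)) = Ad (adj V) (avg (site_perm i) ?Z)"
    using W.avg_Ad_fixed[OF j avg_idem[OF j]] site_perm_adj_site_perm[OF i] by simp
  ultimately have "hs_inner ?Z (avg (site_perm i) ?Z) = 0"
    by (metis hs_inner_Ad[OF unitary] hs_inner_commute hs_inner_dev_avg[OF i] complex_cnj_zero)
  then have "hs_sq (avg (site_perm i) ?Z) = 0"
    using hs_inner_avg[OF j, of ?Z "avg (site_perm i) ?Z"] by (simp add: avg_idem[OF j] hs_inner_self)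
  then have "avg (site_perm i) ?Z = 0"
    by (simp add: hs_sq_eq_0_iff)
  moreover have "Ad V B = Ad V (avg i (clip B)) + ?Z"
    by (metis Ad_add Ad_clip dev_def add.commute diff_add_cancel)
  moreover have "avg (site_perm i) (Ad V (avg i (clip B))) = Ad V (avg i (clip B))"
    by (rule avg_Ad_fixed[OF i avg_idem[OF i]])
  ultimately show ?thesis
    by (metis avg_add avg_clip[OF i] add.right_neutral)
qed

lemma Ad_avg_sites:
  assumes "S \<subseteq> sites"
  shows "Ad V (avg_sites S B) = avg_sites (site_perm ` S) (Ad V B)"
  using assms
proof (induction S rule: avg_sites_induct)
  case empty
  then show ?case
    by (simp add: avg_sites_empty clip_supported)
next
  case (insert i S)
  have "site_perm ` S \<subseteq> sites"
    using insert site_perm(1) by (auto simp: qudits_def)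
  moreover have "site_perm i \<notin> site_perm ` S"
    using insert inj_on_site_perm by (auto simp: qudits_def inj_on_def)
  ultimately have "avg_sites (site_perm ` insert i S) (Ad V B) = avg (site_perm i) (Ad V (avg_sites S B))"
    using insert by (simp add: avg_sites_insert site_perm(1))
  then show ?case
    using insert by (simp add: avg_sites_insert avg_Ad[symmetric])
qed

lemma renyi2_reduced_Ad:
  assumes A: "A \<subseteq> sites"
  shows "renyi2 d (site_perm ` A) (reduced d n (site_perm ` A) (Ad V \<sigma>)) = renyi2 d A (reduced d n A \<sigma>)"
proof -
  have bij: "bij_betw site_perm sites sites"
    by (rule bij_betw_site_perm)
  then have complement: "sites - site_perm ` A = site_perm ` (sites - A)"
    using A unfolding bij_betw_def by (metis Diff_subset inj_on_image_set_diff)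
  moreover have "card (site_perm ` (sites - A)) = card (sites - A)"
    using bij by (meson Diff_subset bij_betw_def card_image inj_on_subset)
  moreover have "site_perm ` A \<subseteq> sites"
    using A bij by (auto simp: bij_betw_def)
  moreover have "avg_sites (site_perm ` (sites - A)) (Ad V \<sigma>) = Ad V (avg_sites (sites - A) \<sigma>)"
    by (simp add: Ad_avg_sites)
  ultimately show ?thesis
    using A by (simp add: renyi2_reduced Ad_opmul[OF unitary, symmetric] trace_Ad[OF unitary])
qed

lemma avg_renyi2_Ad: "avg_renyi2 d n (Ad V \<sigma>) = avg_renyi2 d n \<sigma>"
proof -
  have bij: "bij_betw (image site_perm) (Pow sites) (Pow sites)"
    by (rule bij_betw_image_Pow[OF bij_betw_site_perm])
  have "(\<Sum>A\<in>Pow sites. renyi2 d A (reduced d n A (Ad V \<sigma>)))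
      = (\<Sum>A\<in>Pow sites. renyi2 d (site_perm ` A) (reduced d n (site_perm ` A) (Ad V \<sigma>)))"
    by (rule sum.reindex_bij_betw[OF bij, symmetric])
  also have "\<dots> = (\<Sum>A\<in>Pow sites. renyi2 d A (reduced d n A \<sigma>))"
    by (intro sum.cong refl) (simp add: renyi2_reduced_Ad)
  finally show ?thesis
    by (simp add: avg_renyi2_def)
qed

end

theorem mainTheorem18:
  fixes d n :: nat and U \<rho> :: op
  assumes "d \<ge> 2" and "n \<ge> 1"
    and "unitary d n U"
    and "CiS d n U = 0"
    and "density d n \<rho>"
  shows "avg_renyi2 d n (conj_by d n U \<rho>) \<le> avg_renyi2 d n \<rho>"
proof -
  (* In fact equality holds. *)
  interpret qudit_register d n
    using assms(1) by unfold_locales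
  interpret infl_preserving d n "clip U"
    using unitary_op_clip[OF assms(3)] infl_sum_Ad_if_CiS_zero[OF assms(3,4)] by unfold_locales
  have "avg_renyi2 d n (conj_by d n U \<rho>) = avg_renyi2 d n (Ad (clip U) \<rho>)"
    by (metis avg_renyi2_clip clip_conj_by Ad_clip supported_Ad clip_supported)
  also have "\<dots> = avg_renyi2 d n \<rho>"
    by (rule avg_renyi2_Ad)
  finally show ?thesis
    by simp
qed

end
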